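(* For every $n\ge0$, the triples $(\mathrm{fix},\mathrm{dez},\mathrm{maz})$ and $(\mathrm{fix},\mathrm{des},\mathrm{maj})$ are equidistributed over $\mathfrak S_n$, i.e. for all integers $a,b,c$, $$\#\{\sigma\in\mathfrak S_n:(\mathrm{fix},\mathrm{dez},\mathrm{maz})\sigma=(a,b,c)\}=\#\{\sigma\in\mathfrak S_n:(\mathrm{fix},\mathrm{des},\mathrm{maj})\sigma=(a,b,c)\}.$$ Moreover, the three triples $(\mathrm{fix},\mathrm{exc},\mathrm{maz})$, $(\mathrm{fix},\mathrm{exc},\mathrm{maj})$ and $(\mathrm{fix},\mathrm{exc},\mathrm{maf})$ are equidistributed over $\mathfrak S_n$.
   Context: Permutations $\sigma\in\mathfrak S_n$ are written as words $\sigma(1)\cdots\sigma(n)$. For a word $w=x_1\cdots x_n$ of nonnegative integers: $\mathrm{DES}\,w=\{i:1\le i\le n-1,\ x_i>x_{i+1}\}$, $\mathrm{des}\,w=\#\mathrm{DES}\,w$, $\mathrm{maj}\,w=\sum_{i\in\mathrm{DES}\,w}i$; $\mathrm{Zero}\,w=\{i:x_i=0\}$, $\mathrm{zero}\,w=\#\mathrm{Zero}\,w$; $\mathrm{Pos}\,w$ is the subword of positive letters; $\mathrm{mafz}\,w=\sum_{i\in\mathrm{Zero}\,w}i-\sum_{i=1}^{\mathrm{zero}\,w}i+\mathrm{maj}\,\mathrm{Pos}\,w$. These apply to permutations as words. $\mathrm{fix}\,\sigma$ is the number of fixed points, $\mathrm{exc}\,\sigma=\#\{i:\sigma(i)>i\}$.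 $\mathrm{ZDer}(\sigma)=x_1\cdots x_n$ where $x_i=0$ if $\sigma(i)=i$ and $x_i=\mathrm{red}(\sigma(i))$ otherwise, $\mathrm{red}$ being the increasing bijection from the set of non-fixed points of $\sigma$ onto $\{1,\dots,m\}$, $m=n-\mathrm{fix}\,\sigma$. Then $\mathrm{dez}\,\sigma=\mathrm{des}\,\mathrm{ZDer}(\sigma)$, $\mathrm{maz}\,\sigma=\mathrm{maj}\,\mathrm{ZDer}(\sigma)$, $\mathrm{maf}\,\sigma=\mathrm{mafz}\,\mathrm{ZDer}(\sigma)$. *)

theory Defs
  imports "HOL-Combinatorics.Permutations"
begin

text \<open>Words are lists of natural numbers; positions are 1-indexed as in the paper,
  so the letter at position i of w is w ! (i - 1).\<close>

definition DES :: "nat list \<Rightarrow> nat set" where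
  "DES w = {i. 1 \<le> i \<and> i \<le> length w - 1 \<and> w ! (i - 1) > w ! i}"

definition des :: "nat list \<Rightarrow> nat" where
  "des w = card (DES w)"

definition maj :: "nat list \<Rightarrow> nat" where
  "maj w = (\<Sum>i\<in>DES w. i)"

definition Zero :: "nat list \<Rightarrow> nat set" where
  "Zero w = {i. 1 \<le> i \<and> i \<le> length w \<and> w ! (i - 1) = 0}"

definition zero :: "nat list \<Rightarrow> nat" where
  "zero w = card (Zero w)"

definition Pos :: "nat list \<Rightarrow> nat list" where
  "Pos w = filter (\<lambda>x. x > 0) w"

definition mafz :: "nat list \<Rightarrow> nat" where
  "mafz w = (\<Sum>i\<in>Zero w. i) - (\<Sum>i=1..zero w. i) + maj (Pos w)"

definition pword :: "nat \<Rightarrow> (nat \<Rightarrow> nat) \<Rightarrow> nat list" where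
  "pword n \<sigma> = map \<sigma> [1..<n+1]"

definition fix_pts :: "nat \<Rightarrow> (nat \<Rightarrow> nat) \<Rightarrow> nat" where
  "fix_pts n \<sigma> = card {i \<in> {1..n}. \<sigma> i = i}"

definition exc :: "nat \<Rightarrow> (nat \<Rightarrow> nat) \<Rightarrow> nat" where
  "exc n \<sigma> = card {i \<in> {1..n}. \<sigma> i > i}"

text \<open>red: increasing bijection from the non-fixed points onto {1..m}.\<close>
definition red :: "nat \<Rightarrow> (nat \<Rightarrow> nat) \<Rightarrow> nat \<Rightarrow> nat" where
  "red n \<sigma> k = card {j \<in> {1..n}. \<sigma> j \<noteq> j \<and> j \<le> k}"

definition ZDer :: "nat \<Rightarrow> (nat \<Rightarrow> nat) \<Rightarrow> nat list" where
  "ZDer n \<sigma> = map (\<lambda>i. if \<sigma> i = i then 0 else red n \<sigma> (\<sigma> i)) [1..<n+1]"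

definition dez :: "nat \<Rightarrow> (nat \<Rightarrow> nat) \<Rightarrow> nat" where
  "dez n \<sigma> = des (ZDer n \<sigma>)"

definition maz :: "nat \<Rightarrow> (nat \<Rightarrow> nat) \<Rightarrow> nat" where
  "maz n \<sigma> = maj (ZDer n \<sigma>)"

definition maf :: "nat \<Rightarrow> (nat \<Rightarrow> nat) \<Rightarrow> nat" where
  "maf n \<sigma> = mafz (ZDer n \<sigma>)"

end

theory Submission
  imports Defs
begin

text \<open>
  \<^const>\<open>ZDer\<close> is a bijection from the permutations of \<open>{1..n}\<close> onto the words of
  length \<open>n\<close> whose positive letters form a derangement of \<open>{1..m}\<close>: the zeros are the
  fixed points, the excedances of \<open>\<sigma>\<close> are those of this derangement, and the descents of
  \<open>\<sigma>\<close> are the descents of \<^term>\<open>ZDer n \<sigma>\<close> for the order on letters in which \<open>0\<close> lies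
  below the excedance values and above the other positive letters.  The usual order, with
  \<open>0\<close> lowest, is turned into this one by moving the non-excedance values \<open>t = 1, 2, \<dots>\<close>
  below \<open>0\<close> one at a time; each move is matched by the bijection that slides the letter
  \<open>t\<close> through its block of zeros, which fixes the positive subword.  Hence the descent set
  of \<^term>\<open>ZDer n \<sigma>\<close> and that of \<open>\<sigma>\<close> are equidistributed jointly with the positive subword,
  which carries \<open>fix\<close> and \<open>exc\<close>.

  For \<open>maf\<close>: on the words with given positive subword \<open>v\<close> of length \<open>m\<close> and \<open>z\<close> zeros, both
  maj and mafz have generating function \<open>q\<^bsup>maj v\<^esup> [z + m choose m]\<^sub>q\<close>, as follows from the
  two Pascal recursions for the Gaussian coefficients by removing the last letter.
\<close>

section \<open>Descent sets with respect to an arbitrary relation\<close>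

definition DES_wrt :: "('a \<Rightarrow> 'a \<Rightarrow> bool) \<Rightarrow> 'a list \<Rightarrow> nat set" where
  "DES_wrt R w = {i. 1 \<le> i \<and> i \<le> length w - 1 \<and> R (w ! (i - 1)) (w ! i)}"

lemma DES_eq_DES_wrt: "DES w = DES_wrt (\<lambda>x y. y < x) w"
  unfolding DES_def DES_wrt_def by simp

lemma DES_wrt_subset: "DES_wrt R w \<subseteq> {1..length w - 1}"
  unfolding DES_wrt_def by auto

lemma finite_DES_wrt [simp]: "finite (DES_wrt R w)"
  using DES_wrt_subset finite_subset by blast

lemma DES_wrt_cong:
  "(\<And>x y. x \<in> set w \<Longrightarrow> y \<in> set w \<Longrightarrow> R x y = R' x y) \<Longrightarrow> DES_wrt R w = DES_wrt R' w"
  unfolding DES_wrt_def by auto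

lemma DES_wrt_replicate: "\<not> R z z \<Longrightarrow> DES_wrt R (replicate a z) = {}"
  unfolding DES_wrt_def by auto

lemma DES_wrt_singleton [simp]: "DES_wrt R [x] = {}"
  unfolding DES_wrt_def by auto

lemma DES_wrt_append:
  "DES_wrt R (xs @ ys) = DES_wrt R xs \<union> (\<lambda>i. i + length xs) ` DES_wrt R ys \<union>
     (if xs \<noteq> [] \<and> ys \<noteq> [] \<and> R (last xs) (hd ys) then {length xs} else {})"
proof (rule set_eqI)
  fix i
  let ?L = "length xs"
  consider "i < ?L" | "i = ?L" | "?L < i" by linarith
  then show "i \<in> DES_wrt R (xs @ ys) \<longleftrightarrow> i \<in> DES_wrt R xs \<union> (\<lambda>i. i + ?L) ` DES_wrt R ys \<union>
     (if xs \<noteq> [] \<and> ys \<noteq> [] \<and> R (last xs) (hd ys) then {?L} else {})"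
  proof cases
    case 1
    then show ?thesis
      using DES_wrt_subset[of R ys] unfolding DES_wrt_def by (auto simp: nth_append)
  next
    case 2
    show ?thesis
    proof (cases "xs = [] \<or> ys = []")
      case False
      then have "(xs @ ys) ! (i - 1) = last xs" "(xs @ ys) ! i = hd ys"
        using 2 by (auto simp: nth_append last_conv_nth hd_conv_nth)
      moreover have "1 \<le> i" "i \<le> length (xs @ ys) - 1"
        using 2 False by (cases xs; cases ys; simp)+
      ultimately show ?thesis
        using 2 False DES_wrt_subset[of R xs] unfolding DES_wrt_def by auto
    qed (use 2 in \<open>auto simp: DES_wrt_def\<close>)
  next
    case 3
    define j where "j = i - ?L"
    have j: "i = j + ?L" "1 \<le> j"
      using 3 unfolding j_def by auto
    have "(xs @ ys) ! (i - 1) = ys ! (j - 1)" "(xs @ ys) ! i = ys ! j"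
      using j by (auto simp: nth_append)
    then have "i \<in> DES_wrt R (xs @ ys) \<longleftrightarrow> j \<in> DES_wrt R ys"
      using j unfolding DES_wrt_def by auto
    then show ?thesis
      using 3 j DES_wrt_subset[of R xs] by auto
  qed
qed

lemma DES_wrt_snoc:
  "DES_wrt R (w @ [x]) = DES_wrt R w \<union> (if w \<noteq> [] \<and> R (last w) x then {length w} else {})"
  by (simp add: DES_wrt_append)

lemma DES_wrt_append3:
  assumes "M \<noteq> []"
  shows "DES_wrt R (xs @ M @ ys) = DES_wrt R xs \<union> (\<lambda>i. i + length xs) ` DES_wrt R M
     \<union> (\<lambda>i. i + length M + length xs) ` DES_wrt R ys
     \<union> (if xs \<noteq> [] \<and> R (last xs) (hd M) then {length xs} else {})
     \<union> (if ys \<noteq> [] \<and> R (last M) (hd ys) then {length M + length xs} else {})"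
proof -
  have "DES_wrt R (xs @ M @ ys) = DES_wrt R xs \<union> (\<lambda>i. i + length xs) ` DES_wrt R (M @ ys) \<union>
     (if xs \<noteq> [] \<and> R (last xs) (hd M) then {length xs} else {})"
    using assms by (simp add: DES_wrt_append[of R xs])
  also have "(\<lambda>i. i + length xs) ` DES_wrt R (M @ ys) = (\<lambda>i. i + length xs) ` DES_wrt R M
     \<union> (\<lambda>i. i + length M + length xs) ` DES_wrt R ys
     \<union> (if ys \<noteq> [] \<and> R (last M) (hd ys) then {length M + length xs} else {})"
    using assms unfolding DES_wrt_append[of R M ys] image_Un image_image by simp
  finally show ?thesis by blast
qed

lemma DES_wrt_letter_in_block:
  assumes "\<not> R z z"
  shows "DES_wrt R (replicate a z @ [y] @ replicate b z) =
    (if 0 < a \<and> R z y then {a} else {}) \<union> (if 0 < b \<and> R y z then {Suc a} else {})"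
proof -
  have "DES_wrt R (replicate a z) = {}" "DES_wrt R (replicate b z) = {}"
    using assms by (simp_all add: DES_wrt_replicate)
  moreover have "0 < a \<Longrightarrow> last (replicate a z) = z" "0 < b \<Longrightarrow> hd (replicate b z) = z"
    by (simp_all add: last_replicate hd_replicate)
  ultimately show ?thesis
    using DES_wrt_append3[of "[y]" R "replicate a z" "replicate b z"]
    by (cases "a = 0"; cases "b = 0") auto
qed

section \<open>Positive subword, maj and mafz of a word\<close>

lemma Pos_Nil [simp]: "Pos [] = []"
  unfolding Pos_def by simp

lemma Pos_Cons: "Pos (x # xs) = (if 0 < x then x # Pos xs else Pos xs)"
  unfolding Pos_def by simp

lemma Pos_single [simp]: "Pos [x] = (if 0 < x then [x] else [])"
  unfolding Pos_def by simp

lemma Pos_append [simp]: "Pos (xs @ ys) = Pos xs @ Pos ys"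
  unfolding Pos_def by simp

lemma Pos_replicate_0 [simp]: "Pos (replicate a 0) = []"
  unfolding Pos_def by (induction a) auto

lemma set_Pos: "set (Pos w) = {x \<in> set w. 0 < x}"
  unfolding Pos_def by auto

lemma length_Pos_le: "length (Pos w) \<le> length w"
  unfolding Pos_def by simp

lemma Pos_eq_Nil_iff: "Pos w = [] \<longleftrightarrow> w = replicate (length w) 0"
proof -
  have "Pos w = [] \<longleftrightarrow> (\<forall>x\<in>set w. x = 0)"
    unfolding Pos_def by (auto simp: filter_empty_conv)
  then show ?thesis
    by (metis in_set_replicate replicate_length_same)
qed

lemma last_Pos: "w \<noteq> [] \<Longrightarrow> last w \<noteq> 0 \<Longrightarrow> Pos w \<noteq> [] \<and> last (Pos w) = last w"
  by (induction w rule: rev_induct) auto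

lemma hd_Pos: "ys \<noteq> [] \<Longrightarrow> hd ys \<noteq> 0 \<Longrightarrow> Pos ys \<noteq> [] \<and> hd (Pos ys) = hd ys"
  by (cases ys) (auto simp: Pos_Cons)

lemma maj_Nil [simp]: "maj [] = 0"
  unfolding maj_def DES_def by simp

lemma maj_replicate_0 [simp]: "maj (replicate n 0) = 0"
  unfolding maj_def DES_def by auto

lemma maj_singleton [simp]: "maj [x] = 0"
  unfolding maj_def DES_def by simp

lemma maj_snoc: "maj (w @ [x]) = maj w + (if w \<noteq> [] \<and> x < last w then length w else 0)"
proof -
  have "length w \<notin> DES w"
    unfolding DES_eq_DES_wrt DES_wrt_def by auto
  then show ?thesis
    unfolding maj_def by (auto simp: DES_eq_DES_wrt DES_wrt_snoc)
qed

lemma Zero_snoc: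
  "Zero (w @ [x]) = (if x = 0 then insert (Suc (length w)) (Zero w) else Zero w)"
  unfolding Zero_def by (auto simp: nth_append)

lemma finite_Zero [simp]: "finite (Zero w)"
  unfolding Zero_def by auto

lemma Suc_length_notin_Zero: "Suc (length w) \<notin> Zero w"
  unfolding Zero_def by auto

lemma zero_plus_length_Pos: "zero w + length (Pos w) = length w"
proof -
  have "Zero w = Suc ` {i. i < length w \<and> w ! i = 0}"
  proof (rule set_eqI)
    show "i \<in> Zero w \<longleftrightarrow> i \<in> Suc ` {i. i < length w \<and> w ! i = 0}" for i
      unfolding Zero_def by (cases i) auto
  qed
  then have "zero w = length (filter (\<lambda>x. x = 0) w)"
    unfolding zero_def by (simp add: card_image length_filter_conv_card)
  then show ?thesis
    using sum_length_filter_compl[of "\<lambda>x. x = 0" w] unfolding Pos_def by simp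
qed

lemma zero_snoc_0: "zero (w @ [0]) = Suc (zero w)"
  unfolding zero_def Zero_snoc using Suc_length_notin_Zero by simp

text \<open>The subtraction in the definition of \<^const>\<open>mafz\<close> never truncates.\<close>

lemma sum_Zero_ge: "(\<Sum>i=1..zero w. i) \<le> (\<Sum>i\<in>Zero w. i)"
proof (induction w rule: rev_induct)
  case (snoc x w)
  show ?case
  proof (cases "x = 0")
    case True
    have "zero w \<le> length w"
      using zero_plus_length_Pos[of w] by simp
    then have "(\<Sum>i=1..zero (w @ [x]). i) \<le> (\<Sum>i\<in>Zero w. i) + Suc (length w)"
      using snoc True by (simp add: zero_snoc_0)
    also have "\<dots> = (\<Sum>i\<in>Zero (w @ [x]). i)"
      using True Suc_length_notin_Zero[of w] unfolding Zero_snoc by simp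
    finally show ?thesis .
  next
    case False
    then show ?thesis
      using snoc unfolding zero_def Zero_snoc by simp
  qed
qed (simp add: zero_def Zero_def)

lemma mafz_snoc_0: "mafz (w @ [0]) = mafz w + length (Pos w)"
proof -
  have "(\<Sum>i\<in>Zero (w @ [0]). i) = (\<Sum>i\<in>Zero w. i) + Suc (length w)"
    using Suc_length_notin_Zero[of w] unfolding Zero_snoc by simp
  moreover have "length (Pos w) = length w - zero w" "zero w \<le> length w"
    using zero_plus_length_Pos[of w] by simp_all
  ultimately show ?thesis
    unfolding mafz_def zero_snoc_0 using sum_Zero_ge[of w] by simp
qed

lemma mafz_snoc_pos:
  assumes "0 < x"
  shows "mafz (w @ [x]) = mafz w + (if Pos w \<noteq> [] \<and> x < last (Pos w) then length (Pos w) else 0)"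
proof -
  have "Zero (w @ [x]) = Zero w"
    using assms unfolding Zero_snoc by simp
  then show ?thesis
    unfolding mafz_def zero_def using assms sum_Zero_ge[of w] by (simp add: maj_snoc)
qed

lemma mafz_eq_maj_if_positive:
  assumes "\<forall>x\<in>set w. 0 < x"
  shows "mafz w = maj w"
proof -
  have "Zero w = {}" "Pos w = w"
    using assms unfolding Zero_def Pos_def by (auto simp: filter_id_conv)
  then show ?thesis
    unfolding mafz_def zero_def by simp
qed

lemma mafz_replicate_0 [simp]: "mafz (replicate n 0) = 0"
proof (induction n)
  case (Suc n)
  have "mafz (replicate n 0 @ [0]) = 0"
    using Suc by (simp only: mafz_snoc_0) simp
  then show ?case
    by (simp add: replicate_append_same)
qed (simp add: mafz_def Zero_def zero_def)

section \<open>Gaussian coefficients and the distributions of maj and mafz over zero shuffles\<close>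

definition mshift :: "nat \<Rightarrow> nat multiset \<Rightarrow> nat multiset" where
  "mshift c M = image_mset (\<lambda>x. x + c) M"

lemma mshift_0 [simp]: "mshift 0 M = M"
  unfolding mshift_def by simp

lemma mshift_mshift [simp]: "mshift a (mshift b M) = mshift (b + a) M"
  unfolding mshift_def by (simp add: multiset.map_comp comp_def add.assoc)

lemma mshift_plus [simp]: "mshift c (M + N) = mshift c M + mshift c N"
  unfolding mshift_def by simp

lemma mshift_empty [simp]: "mshift c {#} = {#}"
  unfolding mshift_def by simp

lemma mshift_add_mset [simp]: "mshift c (add_mset x M) = add_mset (x + c) (mshift c M)"
  unfolding mshift_def by simp

text \<open>\<^term>\<open>qbinom z m\<close> is the multiset of exponents of the Gaussian polynomial
  \<open>[z + m choose m]\<^sub>q\<close>, that is, of the inversion numbers of the words with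
  \<open>z\<close> zeros and \<open>m\<close> ones; the recursion removes the last letter.\<close>

fun qbinom :: "nat \<Rightarrow> nat \<Rightarrow> nat multiset" where
  "qbinom 0 m = {#0#}"
| "qbinom (Suc z) 0 = {#0#}"
| "qbinom (Suc z) (Suc m) = mshift (Suc m) (qbinom z (Suc m)) + qbinom (Suc z) m"

lemma qbinom_0_right [simp]: "qbinom z 0 = {#0#}"
  by (cases z) simp_all

text \<open>The second Pascal recursion, which removes the first letter instead of the last.\<close>

lemma qbinom_Suc_Suc':
  "qbinom (Suc z) (Suc m) = qbinom z (Suc m) + mshift (Suc z) (qbinom (Suc z) m)"
proof (induction z m rule: qbinom.induct)
  case (1 m)
  show ?case
  proof (induction m)
    case (Suc m)
    have "qbinom (Suc 0) (Suc (Suc m)) = add_mset (Suc (Suc m)) (qbinom (Suc 0) (Suc m))"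
      by simp
    also have "\<dots> = add_mset (Suc (Suc m)) (add_mset 0 (mshift (Suc 0) (qbinom (Suc 0) m)))"
      by (subst Suc.IH) simp
    also have "\<dots> = qbinom 0 (Suc (Suc m)) + mshift (Suc 0) (qbinom (Suc 0) (Suc m))"
      by (simp add: add_mset_commute)
    finally show ?case .
  qed simp
next
  case (2 z)
  show ?case
    by (induction z) simp_all
next
  case (3 z m)
  have "qbinom (Suc (Suc z)) (Suc (Suc m))
      = mshift (Suc (Suc m)) (qbinom (Suc z) (Suc (Suc m))) + qbinom (Suc (Suc z)) (Suc m)"
    by simp
  also have "\<dots> = mshift (Suc (Suc m)) (qbinom z (Suc (Suc m)))
      + mshift (Suc (Suc m) + Suc z) (qbinom (Suc z) (Suc m))
      + qbinom (Suc z) (Suc m) + mshift (Suc (Suc z)) (qbinom (Suc (Suc z)) m)"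
    using "3.IH" by (simp add: add.commute add.assoc)
  also have "\<dots> = qbinom (Suc z) (Suc (Suc m)) + mshift (Suc (Suc z)) (qbinom (Suc (Suc z)) (Suc m))"
    by (simp add: add_ac)
  finally show ?case .
qed

definition distr :: "('a \<Rightarrow> nat) \<Rightarrow> 'a set \<Rightarrow> nat multiset" where
  "distr f S = image_mset f (mset_set S)"

lemma count_distr: "finite S \<Longrightarrow> count (distr f S) c = card {x \<in> S. f x = c}"
  unfolding distr_def by (simp add: count_image_mset_eq_card_vimage)

lemma distr_empty [simp]: "distr f {} = {#}"
  unfolding distr_def by simp

lemma distr_singleton [simp]: "distr f {x} = {#f x#}"
  unfolding distr_def by simp

lemma distr_union:
  "finite A \<Longrightarrow> finite B \<Longrightarrow> A \<inter> B = {} \<Longrightarrow> distr f (A \<union> B) = distr f A + distr f B"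
  unfolding distr_def by (simp add: mset_set_Union)

lemma distr_image: "inj_on g A \<Longrightarrow> distr f (g ` A) = distr (f \<circ> g) A"
  unfolding distr_def by (simp add: image_mset_mset_set[symmetric] multiset.map_comp)

lemma distr_cong: "(\<And>x. x \<in> A \<Longrightarrow> f x = g x) \<Longrightarrow> distr f A = distr g A"
  unfolding distr_def by (cases "finite A") (auto intro!: image_mset_cong)

lemma distr_plus_const: "distr (\<lambda>x. f x + c) A = mshift c (distr f A)"
  unfolding distr_def mshift_def by (simp add: multiset.map_comp comp_def)

lemma distr_image_snoc: "distr f ((\<lambda>w. w @ [x]) ` A) = distr (\<lambda>w. f (w @ [x])) A"
proof -
  have "inj_on (\<lambda>w. w @ [x]) A"
    by (auto intro: inj_onI)
  then show ?thesis
    by (simp add: distr_image comp_def)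
qed

lemma distr_image_snoc_shift:
  assumes "\<And>w. w \<in> A \<Longrightarrow> f (w @ [x]) = g w + c"
  shows "distr f ((\<lambda>w. w @ [x]) ` A) = mshift c (distr g A)"
  using assms by (simp add: distr_image_snoc distr_plus_const[symmetric] cong: distr_cong)

definition zero_shuffles :: "nat list \<Rightarrow> nat \<Rightarrow> nat list set" where
  "zero_shuffles v z = {w. length w = z + length v \<and> Pos w = v}"

lemma finite_zero_shuffles [simp]: "finite (zero_shuffles v z)"
proof -
  have "zero_shuffles v z \<subseteq> {w. set w \<subseteq> insert 0 (set v) \<and> length w = z + length v}"
    unfolding zero_shuffles_def using set_Pos by fastforce
  moreover have "finite {w. set w \<subseteq> insert 0 (set v) \<and> length w = z + length v}"
    by (rule finite_lists_length_eq) simp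
  ultimately show ?thesis
    using finite_subset by blast
qed

lemma zero_shuffles_Nil: "zero_shuffles [] z = {replicate z 0}"
  unfolding zero_shuffles_def using Pos_eq_Nil_iff by fastforce

lemma zero_shuffles_0:
  assumes "\<forall>x\<in>set v. 0 < x"
  shows "zero_shuffles v 0 = {v}"
proof -
  have "w = v" if "length w = length v" "Pos w = v" for w
    using that unfolding Pos_def by (metis filter_id_conv length_filter_less less_irrefl)
  then show ?thesis
    using assms unfolding zero_shuffles_def Pos_def by auto
qed

definition shuffles_ending_pos :: "nat list \<Rightarrow> nat \<Rightarrow> nat list set" where
  "shuffles_ending_pos v z = {w \<in> zero_shuffles v z. w \<noteq> [] \<and> last w \<noteq> 0}"

definition shuffles_ending_zero :: "nat list \<Rightarrow> nat \<Rightarrow> nat list set" where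
  "shuffles_ending_zero v z = {w \<in> zero_shuffles v z. w = [] \<or> last w = 0}"

lemma distr_zero_shuffles_split:
  "distr f (zero_shuffles v z) = distr f (shuffles_ending_pos v z) + distr f (shuffles_ending_zero v z)"
proof -
  have "zero_shuffles v z = shuffles_ending_pos v z \<union> shuffles_ending_zero v z"
    "shuffles_ending_pos v z \<inter> shuffles_ending_zero v z = {}"
    unfolding shuffles_ending_pos_def shuffles_ending_zero_def by auto
  then show ?thesis
    by (metis distr_union finite_Un finite_zero_shuffles)
qed

lemma shuffles_ending_pos_Nil: "shuffles_ending_pos [] z = {}"
  unfolding shuffles_ending_pos_def zero_shuffles_Nil by (cases "z = 0") auto

lemma shuffles_ending_pos_snoc:
  assumes "0 < y"
  shows "shuffles_ending_pos (v @ [y]) z = (\<lambda>w. w @ [y]) ` zero_shuffles v z"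
proof (intro set_eqI iffI)
  fix w
  assume w: "w \<in> shuffles_ending_pos (v @ [y]) z"
  then have ne: "w \<noteq> []" and "last w \<noteq> 0"
    unfolding shuffles_ending_pos_def by auto
  then have "Pos w = Pos (butlast w) @ [last w]"
    by (metis Pos_append Pos_single append_butlast_last_id neq0_conv)
  then have "Pos (butlast w) = v" "last w = y"
    using w unfolding shuffles_ending_pos_def zero_shuffles_def by simp_all
  then show "w \<in> (\<lambda>w. w @ [y]) ` zero_shuffles v z"
    using w append_butlast_last_id[OF ne]
    unfolding shuffles_ending_pos_def zero_shuffles_def by (intro image_eqI[of _ _ "butlast w"]) auto
qed (use assms in \<open>auto simp: shuffles_ending_pos_def zero_shuffles_def\<close>)

lemma shuffles_ending_zero_0:
  assumes "\<forall>x\<in>set v. 0 < x" "v \<noteq> []"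
  shows "shuffles_ending_zero v 0 = {}"
  using assms unfolding shuffles_ending_zero_def zero_shuffles_0[OF assms(1)] by auto

lemma shuffles_ending_zero_Suc:
  "shuffles_ending_zero v (Suc z) = (\<lambda>w. w @ [0]) ` zero_shuffles v z"
proof (intro set_eqI iffI)
  fix w
  assume w: "w \<in> shuffles_ending_zero v (Suc z)"
  then have ne: "w \<noteq> []" and "last w = 0"
    unfolding shuffles_ending_zero_def zero_shuffles_def by auto
  then have "Pos w = Pos (butlast w)"
    by (metis Pos_append Pos_single append.right_neutral append_butlast_last_id less_irrefl)
  then show "w \<in> (\<lambda>w. w @ [0]) ` zero_shuffles v z"
    using w append_butlast_last_id[OF ne] \<open>last w = 0\<close>
    unfolding shuffles_ending_zero_def zero_shuffles_def by (intro image_eqI[of _ _ "butlast w"]) auto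
qed (auto simp: shuffles_ending_zero_def zero_shuffles_def)

lemma shuffles_ending_zero_Nil: "shuffles_ending_zero [] z = {replicate z 0}"
  unfolding shuffles_ending_zero_def zero_shuffles_Nil by (cases "z = 0") auto

lemma distr_mafz_zero_shuffles:
  assumes "\<forall>x\<in>set v. 0 < x"
  shows "distr mafz (zero_shuffles v z) = mshift (maj v) (qbinom z (length v))"
  using assms
proof (induction v arbitrary: z rule: rev_induct)
  case Nil
  then show ?case
    by (simp add: zero_shuffles_Nil)
next
  case (snoc y v)
  have y: "0 < y" and v: "\<forall>x\<in>set v. 0 < x"
    using snoc.prems by auto
  let ?c = "if v \<noteq> [] \<and> y < last v then length v else 0"
  show ?case
  proof (induction z)
    case 0
    then show ?case
      using snoc.prems by (simp add: zero_shuffles_0 mafz_eq_maj_if_positive)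
  next
    case (Suc z)
    have "distr mafz (shuffles_ending_zero (v @ [y]) (Suc z))
        = mshift (Suc (length v)) (distr mafz (zero_shuffles (v @ [y]) z))"
      unfolding shuffles_ending_zero_Suc
      by (rule distr_image_snoc_shift) (simp add: mafz_snoc_0 zero_shuffles_def)
    moreover have "distr mafz (shuffles_ending_pos (v @ [y]) (Suc z))
        = mshift ?c (distr mafz (zero_shuffles v (Suc z)))"
      unfolding shuffles_ending_pos_snoc[OF y]
      by (rule distr_image_snoc_shift) (use y in \<open>simp add: mafz_snoc_pos zero_shuffles_def\<close>)
    moreover have "maj (v @ [y]) = maj v + ?c"
      by (simp add: maj_snoc)
    ultimately have "distr mafz (zero_shuffles (v @ [y]) (Suc z))
        = mshift (maj (v @ [y])) (qbinom (Suc z) (length v)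
            + mshift (Suc (length v)) (qbinom z (Suc (length v))))"
      using Suc.IH snoc.IH[OF v] by (simp add: distr_zero_shuffles_split[of mafz "v @ [y]" "Suc z"] add_ac)
    then show ?case
      by (simp add: add.commute)
  qed
qed

lemma distr_maj_ending_pos_snoc:
  assumes "0 < y"
  shows "distr maj (shuffles_ending_pos (v @ [y]) z)
    = mshift (if v \<noteq> [] \<and> y < last v then z + length v else 0) (distr maj (shuffles_ending_pos v z))
      + distr maj (shuffles_ending_zero v z)"
proof -
  have "distr maj (shuffles_ending_pos (v @ [y]) z) = distr (\<lambda>w. maj (w @ [y])) (zero_shuffles v z)"
    by (simp add: shuffles_ending_pos_snoc[OF assms] distr_image_snoc)
  also have "\<dots> = distr (\<lambda>w. maj (w @ [y])) (shuffles_ending_pos v z)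
      + distr (\<lambda>w. maj (w @ [y])) (shuffles_ending_zero v z)"
    by (rule distr_zero_shuffles_split)
  also have "distr (\<lambda>w. maj (w @ [y])) (shuffles_ending_pos v z)
      = distr (\<lambda>w. maj w + (if v \<noteq> [] \<and> y < last v then z + length v else 0)) (shuffles_ending_pos v z)"
  proof (rule distr_cong)
    fix w
    assume w: "w \<in> shuffles_ending_pos v z"
    then have "v \<noteq> [] \<and> last v = last w" "length w = z + length v" "w \<noteq> []"
      using last_Pos[of w] unfolding shuffles_ending_pos_def zero_shuffles_def by auto
    then show "maj (w @ [y]) = maj w + (if v \<noteq> [] \<and> y < last v then z + length v else 0)"
      by (simp add: maj_snoc)
  qed
  also have "distr (\<lambda>w. maj (w @ [y])) (shuffles_ending_zero v z) = distr maj (shuffles_ending_zero v z)"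
    by (rule distr_cong) (auto simp: maj_snoc shuffles_ending_zero_def)
  finally show ?thesis
    by (simp add: distr_plus_const)
qed

lemma distr_maj_ending_zero_Suc:
  "distr maj (shuffles_ending_zero v (Suc z))
    = mshift (z + length v) (distr maj (shuffles_ending_pos v z)) + distr maj (shuffles_ending_zero v z)"
proof -
  have "distr maj (shuffles_ending_zero v (Suc z)) = distr (\<lambda>w. maj (w @ [0])) (zero_shuffles v z)"
    by (simp add: shuffles_ending_zero_Suc distr_image_snoc)
  also have "\<dots> = distr (\<lambda>w. maj (w @ [0])) (shuffles_ending_pos v z)
      + distr (\<lambda>w. maj (w @ [0])) (shuffles_ending_zero v z)"
    by (rule distr_zero_shuffles_split)
  also have "distr (\<lambda>w. maj (w @ [0])) (shuffles_ending_pos v z)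
      = distr (\<lambda>w. maj w + (z + length v)) (shuffles_ending_pos v z)"
    by (rule distr_cong) (auto simp: maj_snoc shuffles_ending_pos_def zero_shuffles_def)
  also have "distr (\<lambda>w. maj (w @ [0])) (shuffles_ending_zero v z) = distr maj (shuffles_ending_zero v z)"
    by (rule distr_cong) (auto simp: maj_snoc shuffles_ending_zero_def)
  finally show ?thesis
    by (simp add: distr_plus_const)
qed

lemma distr_maj_ending_zero:
  assumes "\<forall>x\<in>set v. 0 < x" "v \<noteq> []"
    and ending_pos: "\<And>z. distr maj (shuffles_ending_pos v z) = mshift (maj v) (qbinom z (length v - 1))"
  shows "distr maj (shuffles_ending_zero v z)
    = (if z = 0 then {#} else mshift (maj v + length v) (qbinom (z - 1) (length v)))"
proof (induction z)
  case 0
  then show ?case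
    using shuffles_ending_zero_0[OF assms(1,2)] by simp
next
  case (Suc z)
  obtain m where m: "length v = Suc m"
    using assms(2) by (cases v) auto
  show ?case
  proof (cases z)
    case (Suc z')
    have "qbinom z (Suc m) = qbinom z' (Suc m) + mshift z (qbinom z m)"
      using Suc qbinom_Suc_Suc' by simp
    then show ?thesis
      using Suc.IH Suc by (simp add: distr_maj_ending_zero_Suc ending_pos m add_ac)
  qed (simp add: distr_maj_ending_zero_Suc ending_pos m Suc.IH shuffles_ending_zero_0[OF assms(1,2)])
qed

lemma distr_maj_ending_pos:
  assumes "\<forall>x\<in>set v. 0 < x" "0 < y"
  shows "distr maj (shuffles_ending_pos (v @ [y]) z) = mshift (maj (v @ [y])) (qbinom z (length v))"
  using assms
proof (induction v arbitrary: y z rule: rev_induct)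
  case Nil
  then show ?case
    using distr_maj_ending_pos_snoc[of y "[]" z]
    by (simp add: shuffles_ending_pos_Nil shuffles_ending_zero_Nil)
next
  case (snoc x u)
  let ?v = "u @ [x]"
  have ending_pos: "distr maj (shuffles_ending_pos ?v z) = mshift (maj ?v) (qbinom z (length ?v - 1))" for z
    using snoc by simp
  have ending_zero: "distr maj (shuffles_ending_zero ?v z)
      = (if z = 0 then {#} else mshift (maj ?v + length ?v) (qbinom (z - 1) (length ?v)))"
    by (rule distr_maj_ending_zero[OF snoc.prems(1) _ ending_pos]) simp
  have step: "distr maj (shuffles_ending_pos (?v @ [y]) z)
      = mshift (if y < x then z + length ?v else 0) (distr maj (shuffles_ending_pos ?v z))
        + distr maj (shuffles_ending_zero ?v z)"
    using distr_maj_ending_pos_snoc[OF snoc.prems(2), of ?v z] by simp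
  have maj_v: "maj (?v @ [y]) = maj ?v + (if y < x then length ?v else 0)"
    using maj_snoc[of ?v y] by simp
  show ?case
  proof (cases z)
    case 0
    then show ?thesis
      unfolding step ending_pos ending_zero maj_v by simp
  next
    case (Suc z')
    have "qbinom z (length ?v) = (if y < x
        then qbinom z' (length ?v) + mshift z (qbinom z (length u))
        else mshift (length ?v) (qbinom z' (length ?v)) + qbinom z (length u))"
      using Suc qbinom_Suc_Suc' by simp
    then show ?thesis
      unfolding step ending_pos ending_zero maj_v using Suc by (cases "y < x") (simp_all add: add_ac)
  qed
qed

lemma distr_maj_zero_shuffles:
  assumes "\<forall>x\<in>set v. 0 < x"
  shows "distr maj (zero_shuffles v z) = mshift (maj v) (qbinom z (length v))"
proof (cases v rule: rev_cases)
  case (snoc u y)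
  then have ne: "v \<noteq> []" and m: "length v = Suc (length u)"
    by simp_all
  have ending_pos: "distr maj (shuffles_ending_pos v z) = mshift (maj v) (qbinom z (length u))" for z
    using snoc assms distr_maj_ending_pos by simp
  note ending_zero = distr_maj_ending_zero[OF assms ne, unfolded m diff_Suc_1, OF ending_pos]
  show ?thesis
  proof (cases z)
    case (Suc z')
    then show ?thesis
      by (simp add: distr_zero_shuffles_split[of maj v] ending_pos ending_zero m add_ac)
  qed (simp add: distr_zero_shuffles_split[of maj v] ending_pos ending_zero m)
qed (simp add: zero_shuffles_Nil)

theorem distr_maj_eq_distr_mafz:
  "\<forall>x\<in>set v. 0 < x \<Longrightarrow> distr maj (zero_shuffles v z) = distr mafz (zero_shuffles v z)"
  by (simp add: distr_maj_zero_shuffles distr_mafz_zero_shuffles)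

section \<open>Sliding a letter through its block of zeros\<close>

definition zero_block_decomp :: "nat \<Rightarrow> nat list \<Rightarrow> nat list \<Rightarrow> nat \<Rightarrow> nat \<Rightarrow> nat list \<Rightarrow> bool" where
  "zero_block_decomp y w xs a b ys \<longleftrightarrow>
     w = xs @ replicate a 0 @ [y] @ replicate b 0 @ ys \<and> y \<notin> set xs
     \<and> (xs \<noteq> [] \<longrightarrow> last xs \<noteq> 0) \<and> (ys \<noteq> [] \<longrightarrow> hd ys \<noteq> 0)"

definition block_prefix :: "nat \<Rightarrow> nat list \<Rightarrow> nat list" where
  "block_prefix y w = rev (dropWhile (\<lambda>x. x = 0) (rev (takeWhile (\<lambda>x. x \<noteq> y) w)))"

definition zeros_before :: "nat \<Rightarrow> nat list \<Rightarrow> nat" where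
  "zeros_before y w = length (takeWhile (\<lambda>x. x = 0) (rev (takeWhile (\<lambda>x. x \<noteq> y) w)))"

definition zeros_after :: "nat \<Rightarrow> nat list \<Rightarrow> nat" where
  "zeros_after y w = length (takeWhile (\<lambda>x. x = 0) (tl (dropWhile (\<lambda>x. x \<noteq> y) w)))"

definition block_suffix :: "nat \<Rightarrow> nat list \<Rightarrow> nat list" where
  "block_suffix y w = dropWhile (\<lambda>x. x = 0) (tl (dropWhile (\<lambda>x. x \<noteq> y) w))"

lemma replicate_takeWhile_append_dropWhile:
  "replicate (length (takeWhile (\<lambda>x. x = c) xs)) c @ dropWhile (\<lambda>x. x = c) xs = xs"
  by (induction xs) auto

lemma rev_dropWhile_rev_append_replicate:
  "rev (dropWhile (\<lambda>x. x = c) (rev xs)) @ replicate (length (takeWhile (\<lambda>x. x = c) (rev xs))) c = xs"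
proof -
  have "rev (rev xs) = rev (replicate (length (takeWhile (\<lambda>x. x = c) (rev xs))) c
      @ dropWhile (\<lambda>x. x = c) (rev xs))"
    by (simp only: replicate_takeWhile_append_dropWhile)
  then show ?thesis
    by simp
qed

lemma zero_block_decomp_exists:
  assumes "y \<in> set w"
  shows "zero_block_decomp y w (block_prefix y w) (zeros_before y w) (zeros_after y w) (block_suffix y w)"
proof -
  let ?pre = "takeWhile (\<lambda>x. x \<noteq> y) w" and ?post = "tl (dropWhile (\<lambda>x. x \<noteq> y) w)"
  let ?r = "rev ?pre"
  have ne: "dropWhile (\<lambda>x. x \<noteq> y) w \<noteq> []"
    using assms by (simp add: dropWhile_eq_Nil_conv)
  then have "hd (dropWhile (\<lambda>x. x \<noteq> y) w) = y"
    using hd_dropWhile[OF ne] by simp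
  then have "dropWhile (\<lambda>x. x \<noteq> y) w = y # ?post"
    using ne by (cases "dropWhile (\<lambda>x. x \<noteq> y) w") auto
  then have w: "w = ?pre @ y # ?post"
    using takeWhile_dropWhile_id[of "\<lambda>x. x \<noteq> y" w] by simp
  have pre: "?pre = block_prefix y w @ replicate (zeros_before y w) 0"
    unfolding block_prefix_def zeros_before_def by (rule rev_dropWhile_rev_append_replicate[symmetric])
  have post: "?post = replicate (zeros_after y w) 0 @ block_suffix y w"
    unfolding zeros_after_def block_suffix_def by (rule replicate_takeWhile_append_dropWhile[symmetric])
  have "w = block_prefix y w @ replicate (zeros_before y w) 0 @ [y]
      @ replicate (zeros_after y w) 0 @ block_suffix y w"
    using w unfolding pre post by (simp only: append_assoc append.simps)
  moreover have "y \<notin> set ?pre"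
    by (auto dest: set_takeWhileD)
  then have "y \<notin> set (block_prefix y w)"
    unfolding pre by simp
  moreover have "last (block_prefix y w) \<noteq> 0" if "block_prefix y w \<noteq> []"
  proof -
    have "dropWhile (\<lambda>x. x = 0) ?r \<noteq> []"
      using that unfolding block_prefix_def by simp
    then show ?thesis
      using hd_dropWhile unfolding block_prefix_def by (simp only: last_rev rev_rev_ident not_False_eq_True)
  qed
  moreover have "hd (block_suffix y w) \<noteq> 0" if "block_suffix y w \<noteq> []"
    using that hd_dropWhile unfolding block_suffix_def by blast
  ultimately show ?thesis
    unfolding zero_block_decomp_def by blast
qed

lemma zero_block_decomp_unique:
  assumes "zero_block_decomp y w xs a b ys" "y \<noteq> 0"
  shows "block_prefix y w = xs \<and> zeros_before y w = a \<and> zeros_after y w = b \<and> block_suffix y w = ys"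
proof -
  have w: "w = xs @ replicate a 0 @ [y] @ replicate b 0 @ ys" and y: "y \<notin> set xs"
    and xs: "xs \<noteq> [] \<longrightarrow> last xs \<noteq> 0" and ys: "ys \<noteq> [] \<longrightarrow> hd ys \<noteq> 0"
    using assms unfolding zero_block_decomp_def by auto
  have "takeWhile (\<lambda>x. x \<noteq> y) w = xs @ replicate a 0"
    unfolding w using y assms(2) by (simp add: takeWhile_append)
  moreover have "tl (dropWhile (\<lambda>x. x \<noteq> y) w) = replicate b 0 @ ys"
    unfolding w using y assms(2) by (simp add: dropWhile_append)
  moreover have "takeWhile (\<lambda>x. x = 0) (rev xs) = []" "dropWhile (\<lambda>x. x = 0) (rev xs) = rev xs"
    using xs by (cases xs rule: rev_cases, simp_all)+
  moreover have "takeWhile (\<lambda>x. x = 0) ys = []" "dropWhile (\<lambda>x. x = 0) ys = ys"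
    using ys by (cases ys, simp_all)+
  ultimately show ?thesis
    unfolding block_prefix_def zeros_before_def zeros_after_def block_suffix_def
    by (simp add: takeWhile_append dropWhile_append)
qed

text \<open>The letter \<open>y\<close> moves one place to the right within its maximal block of zeros,
  and from the end of the block back to its front.\<close>

definition slide :: "nat \<Rightarrow> nat list \<Rightarrow> nat list" where
  "slide y w = block_prefix y w @
     (if 0 < zeros_after y w
      then replicate (Suc (zeros_before y w)) 0 @ [y] @ replicate (zeros_after y w - 1) 0
      else replicate 0 0 @ [y] @ replicate (zeros_before y w) 0)
     @ block_suffix y w"

lemma slide_zero_block:
  assumes "zero_block_decomp y w xs a b ys" "y \<noteq> 0"
  shows "slide y w = xs @
    (if 0 < b then replicate (Suc a) 0 @ [y] @ replicate (b - 1) 0 else replicate 0 0 @ [y] @ replicate a 0)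
    @ ys"
  using zero_block_decomp_unique[OF assms] unfolding slide_def by simp

lemma zero_block_decomp_slide:
  assumes "zero_block_decomp y w xs a b ys" "y \<noteq> 0"
  shows "zero_block_decomp y (slide y w) xs (if 0 < b then Suc a else 0) (if 0 < b then b - 1 else a) ys"
  using assms(1) slide_zero_block[OF assms] unfolding zero_block_decomp_def by (cases "0 < b") auto

lemma slide_inj:
  assumes "y \<noteq> 0" "y \<in> set w1" "y \<in> set w2" "slide y w1 = slide y w2"
  shows "w1 = w2"
proof -
  obtain xs1 a1 b1 ys1 xs2 a2 b2 ys2 where
    d1: "zero_block_decomp y w1 xs1 a1 b1 ys1" and d2: "zero_block_decomp y w2 xs2 a2 b2 ys2"
    using zero_block_decomp_exists assms(2,3) by blast
  have "xs1 = xs2 \<and> ys1 = ys2 \<and> (if 0 < b1 then Suc a1 else 0) = (if 0 < b2 then Suc a2 else 0)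
      \<and> (if 0 < b1 then b1 - 1 else a1) = (if 0 < b2 then b2 - 1 else a2)"
    using zero_block_decomp_unique[OF zero_block_decomp_slide[OF d1 assms(1)] assms(1)]
      zero_block_decomp_unique[OF zero_block_decomp_slide[OF d2 assms(1)] assms(1)] assms(4)
    by simp
  then have "xs1 = xs2" "ys1 = ys2" "a1 = a2" "b1 = b2"
    by (auto split: if_splits)
  then show ?thesis
    using d1 d2 unfolding zero_block_decomp_def by simp
qed

lemma zero_block_decomp_Pos:
  "zero_block_decomp y w xs a b ys \<Longrightarrow> y \<noteq> 0 \<Longrightarrow> Pos w = Pos xs @ y # Pos ys"
  unfolding zero_block_decomp_def by (auto simp: Pos_Cons)

lemma
  assumes "y \<noteq> 0" "y \<in> set w"
  shows Pos_slide: "Pos (slide y w) = Pos w"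
    and length_slide: "length (slide y w) = length w"
proof -
  obtain xs a b ys where d: "zero_block_decomp y w xs a b ys"
    using zero_block_decomp_exists[OF assms(2)] by blast
  then have "w = xs @ replicate a 0 @ [y] @ replicate b 0 @ ys"
    unfolding zero_block_decomp_def by simp
  then show "Pos (slide y w) = Pos w" "length (slide y w) = length w"
    using slide_zero_block[OF d assms(1)] assms(1) by (cases "0 < b", simp_all add: Pos_Cons)+
qed

text \<open>Descents for the order on letters in which \<open>0\<close> lies above the positive letters
  outside \<open>A\<close> and below those in \<open>A\<close>.\<close>

definition zdesc :: "nat set \<Rightarrow> nat \<Rightarrow> nat \<Rightarrow> bool" where
  "zdesc A x y \<longleftrightarrow> (0 < y \<and> y < x) \<or> (0 < x \<and> y = 0 \<and> x \<in> A) \<or> (x = 0 \<and> 0 < y \<and> y \<notin> A)"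

lemma not_zdesc_0_0 [simp]: "\<not> zdesc A 0 0"
  unfolding zdesc_def by simp

lemma zdesc_Diff_singleton: "x \<noteq> y \<Longrightarrow> z \<noteq> y \<Longrightarrow> zdesc (A - {y}) x z = zdesc A x z"
  unfolding zdesc_def by auto

lemma DES_eq_DES_wrt_zdesc: "DES w = DES_wrt (zdesc (set (Pos w))) w"
  unfolding DES_eq_DES_wrt
  by (rule DES_wrt_cong) (auto simp: zdesc_def set_Pos)

text \<open>Sliding \<open>y\<close> through its zero block turns the descents for \<open>A\<close> into those for
  \<open>A - {y}\<close>, provided that comparing with \<open>y\<close> or with \<open>0\<close> amounts to the same for the
  two letters bordering the block.\<close>

lemma DES_wrt_slide:
  assumes d: "zero_block_decomp y w xs a b ys" and y: "y \<noteq> 0" "y \<notin> set ys" "y \<in> A"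
    and left: "xs \<noteq> [] \<Longrightarrow> y < last xs \<longleftrightarrow> last xs \<in> A"
    and right: "ys \<noteq> [] \<Longrightarrow> hd ys < y \<longleftrightarrow> hd ys \<notin> A"
  shows "DES_wrt (zdesc (A - {y})) (slide y w) = DES_wrt (zdesc A) w"
proof -
  define M where "M = replicate a 0 @ [y] @ replicate b 0"
  define M' where "M' = replicate (if 0 < b then Suc a else 0) 0 @ [y]
    @ replicate (if 0 < b then b - 1 else a) 0"
  have y_xs: "y \<notin> set xs" and xs: "xs \<noteq> [] \<Longrightarrow> last xs \<noteq> 0" and ys: "ys \<noteq> [] \<Longrightarrow> hd ys \<noteq> 0"
    using d unfolding zero_block_decomp_def by auto
  have w: "w = xs @ M @ ys" and w': "slide y w = xs @ M' @ ys"
    using d slide_zero_block[OF d y(1)] unfolding zero_block_decomp_def M_def M'_def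
    by (cases "0 < b"; simp)+
  have M: "M \<noteq> []" "M' \<noteq> []" "length M' = length M"
    unfolding M_def M'_def by auto
  have "DES_wrt (zdesc (A - {y})) xs = DES_wrt (zdesc A) xs"
    by (intro DES_wrt_cong zdesc_Diff_singleton) (use y_xs in auto)
  moreover have "DES_wrt (zdesc (A - {y})) ys = DES_wrt (zdesc A) ys"
    by (intro DES_wrt_cong zdesc_Diff_singleton) (use y(2) in auto)
  moreover have "DES_wrt (zdesc (A - {y})) M' = DES_wrt (zdesc A) M"
    unfolding M_def M'_def DES_wrt_letter_in_block[of "zdesc _", OF not_zdesc_0_0] using y
    by (cases "0 < b"; cases "b = 1") (auto simp: zdesc_def)
  moreover have "zdesc (A - {y}) (last xs) (hd M') = zdesc A (last xs) (hd M)" if "xs \<noteq> []"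
    using xs[OF that] left[OF that] y_xs last_in_set[OF that] y unfolding M_def M'_def
    by (cases "0 < b"; cases "0 < a") (auto simp: zdesc_def)
  moreover have "zdesc (A - {y}) (last M') (hd ys) = zdesc A (last M) (hd ys)" if "ys \<noteq> []"
    using ys[OF that] right[OF that] y(2) hd_in_set[OF that] y unfolding M_def M'_def
    by (cases "0 < b"; cases "0 < a"; cases "b = 1") (auto simp: zdesc_def last_append)
  ultimately show ?thesis
    unfolding w' unfolding w DES_wrt_append3[OF M(1)] DES_wrt_append3[OF M(2)] M(3)
    by (cases "xs = []"; cases "ys = []") auto
qed

section \<open>Derangement words and a chain of slides\<close>

definition derangement_word :: "nat list \<Rightarrow> bool" where
  "derangement_word v \<longleftrightarrow> distinct v \<and> set v = {1..length v} \<and> (\<forall>j<length v. v ! j \<noteq> Suc j)"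

definition zder_words :: "nat \<Rightarrow> nat list set" where
  "zder_words n = {w. length w = n \<and> derangement_word (Pos w)}"

lemma derangement_word_pos: "derangement_word v \<Longrightarrow> x \<in> set v \<Longrightarrow> 0 < x"
  unfolding derangement_word_def by auto

lemma finite_zder_words: "finite (zder_words n)"
proof -
  have "zder_words n \<subseteq> {w. set w \<subseteq> {0..n} \<and> length w = n}"
  proof safe
    fix w x
    assume w: "w \<in> zder_words n" and x: "x \<in> set w"
    then have "set (Pos w) = {1..length (Pos w)}" "length w = n"
      unfolding zder_words_def derangement_word_def by auto
    moreover have "x = 0 \<or> x \<in> set (Pos w)"
      using x by (auto simp: set_Pos)
    ultimately show "x \<in> {0..n}"
      using length_Pos_le[of w] by auto
  qed (simp add: zder_words_def)
  moreover have "finite {w. set w \<subseteq> {0..n} \<and> length w = n}"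
    by (rule finite_lists_length_eq) simp
  ultimately show ?thesis
    using finite_subset by blast
qed

lemma nth_mem_indexed_set_iff:
  "distinct v \<Longrightarrow> i < length v \<Longrightarrow> v ! i \<in> {v ! j | j. j < length v \<and> P j (v ! j)} \<longleftrightarrow> P i (v ! i)"
  by (auto simp: nth_eq_iff_index_eq)

definition exc_values :: "nat list \<Rightarrow> nat set" where
  "exc_values v = {v ! j | j. j < length v \<and> Suc j < v ! j}"

definition nonexc_values :: "nat list \<Rightarrow> nat set" where
  "nonexc_values v = {v ! j | j. j < length v \<and> v ! j < Suc j}"

text \<open>For \<open>t = 0\<close> this is the set of all letters, for which \<^const>\<open>zdesc\<close> gives the usual
  descents; for large \<open>t\<close> it is the set of excedance values.\<close>

definition exc_or_above :: "nat list \<Rightarrow> nat \<Rightarrow> nat set" where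
  "exc_or_above v t = {v ! j | j. j < length v \<and> (Suc j < v ! j \<or> t \<le> v ! j)}"

lemma exc_or_above_0: "exc_or_above v 0 = set v"
  unfolding exc_or_above_def by (auto simp: set_conv_nth)

lemma exc_or_above_large:
  assumes "derangement_word v" "length v \<le> n"
  shows "exc_or_above v (Suc n) = exc_values v"
proof -
  have "v ! j \<le> n" if "j < length v" for j
    using assms nth_mem[OF that] unfolding derangement_word_def by auto
  then show ?thesis
    unfolding exc_or_above_def exc_values_def by (metis not_less_eq_eq)
qed

lemma exc_or_above_Suc:
  assumes "derangement_word v"
  shows "exc_or_above v (Suc t) = exc_or_above v t - (nonexc_values v \<inter> {t})"
proof (rule set_eqI)
  fix x
  have dist: "distinct v" and nofix: "\<And>j. j < length v \<Longrightarrow> v ! j \<noteq> Suc j"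
    using assms unfolding derangement_word_def by auto
  show "x \<in> exc_or_above v (Suc t) \<longleftrightarrow> x \<in> exc_or_above v t - (nonexc_values v \<inter> {t})"
  proof (cases "x \<in> set v")
    case True
    then obtain i where i: "i < length v" "x = v ! i"
      by (auto simp: in_set_conv_nth)
    have "v ! i \<in> exc_or_above v s \<longleftrightarrow> Suc i < v ! i \<or> s \<le> v ! i" for s
      unfolding exc_or_above_def by (rule nth_mem_indexed_set_iff[OF dist i(1)])
    moreover have "v ! i \<in> nonexc_values v \<longleftrightarrow> v ! i < Suc i"
      unfolding nonexc_values_def by (rule nth_mem_indexed_set_iff[OF dist i(1)])
    ultimately show ?thesis
      unfolding i(2) using nofix[OF i(1)] by (simp add: Diff_iff) linarith
  next
    case False
    moreover have "exc_or_above v s \<subseteq> set v" for s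
      unfolding exc_or_above_def by auto
    ultimately show ?thesis
      by blast
  qed
qed

definition slide_nonexc :: "nat \<Rightarrow> nat list \<Rightarrow> nat list" where
  "slide_nonexc t w = (if t \<in> nonexc_values (Pos w) then slide t w else w)"

lemma nonexc_valuesD:
  assumes "t \<in> nonexc_values (Pos w)" "derangement_word (Pos w)"
  shows "t \<noteq> 0" "t \<in> set w"
proof -
  obtain j where "j < length (Pos w)" "t = Pos w ! j"
    using assms(1) unfolding nonexc_values_def by blast
  then have t: "t \<in> set (Pos w)"
    by simp
  then have "0 < t"
    by (rule derangement_word_pos[OF assms(2)])
  then show "t \<noteq> 0"
    by simp
  show "t \<in> set w"
    using t by (simp add: set_Pos)
qed

lemma Pos_slide_nonexc:
  assumes "derangement_word (Pos w)"
  shows "Pos (slide_nonexc t w) = Pos w"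
proof (cases "t \<in> nonexc_values (Pos w)")
  case True
  then show ?thesis
    using Pos_slide[OF nonexc_valuesD[OF True assms]] unfolding slide_nonexc_def by simp
qed (simp add: slide_nonexc_def)

lemma length_slide_nonexc:
  assumes "derangement_word (Pos w)"
  shows "length (slide_nonexc t w) = length w"
proof (cases "t \<in> nonexc_values (Pos w)")
  case True
  then show ?thesis
    using length_slide[OF nonexc_valuesD[OF True assms]] unfolding slide_nonexc_def by simp
qed (simp add: slide_nonexc_def)

lemma slide_nonexc_in_zder_words: "w \<in> zder_words n \<Longrightarrow> slide_nonexc t w \<in> zder_words n"
  using Pos_slide_nonexc length_slide_nonexc unfolding zder_words_def by auto

lemma inj_on_slide_nonexc: "inj_on (slide_nonexc t) (zder_words n)"
proof (rule inj_onI)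
  fix w1 w2
  assume w: "w1 \<in> zder_words n" "w2 \<in> zder_words n" and eq: "slide_nonexc t w1 = slide_nonexc t w2"
  then have der: "derangement_word (Pos w1)" "derangement_word (Pos w2)"
    unfolding zder_words_def by auto
  then have "Pos w1 = Pos w2"
    using eq Pos_slide_nonexc by metis
  show "w1 = w2"
  proof (cases "t \<in> nonexc_values (Pos w1)")
    case True
    then have "t \<in> nonexc_values (Pos w2)"
      using \<open>Pos w1 = Pos w2\<close> by simp
    then show ?thesis
      using True eq slide_inj[of t w1 w2] nonexc_valuesD[OF True der(1)]
        nonexc_valuesD[OF _ der(2)] unfolding slide_nonexc_def by simp
  next
    case False
    then show ?thesis
      using eq \<open>Pos w1 = Pos w2\<close> unfolding slide_nonexc_def by simp
  qed
qed

lemma bij_betw_slide_nonexc: "bij_betw (slide_nonexc t) (zder_words n) (zder_words n)"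
proof -
  have "slide_nonexc t ` zder_words n \<subseteq> zder_words n"
    using slide_nonexc_in_zder_words by blast
  then show ?thesis
    unfolding bij_betw_def using inj_on_slide_nonexc endo_inj_surj[OF finite_zder_words] by blast
qed

text \<open>Across its zero block, a non-excedance value \<open>t\<close> has neighbours that compare with
  \<open>t\<close> as they compare with \<open>0\<close> for \<^term>\<open>zdesc (exc_or_above v t)\<close>; this uses that
  \<open>t\<close> does not exceed its position.\<close>

lemma nonexc_block_borders:
  assumes der: "derangement_word (Pos w)" and t: "t \<in> nonexc_values (Pos w)"
    and d: "zero_block_decomp t w xs a b ys"
  shows "t \<notin> set ys" "t \<in> exc_or_above (Pos w) t"
    and "xs \<noteq> [] \<Longrightarrow> t < last xs \<longleftrightarrow> last xs \<in> exc_or_above (Pos w) t"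
    and "ys \<noteq> [] \<Longrightarrow> hd ys < t \<longleftrightarrow> hd ys \<notin> exc_or_above (Pos w) t"
proof -
  let ?v = "Pos w" and ?A = "exc_or_above (Pos w) t" and ?j = "length (Pos xs)"
  have dist: "distinct ?v"
    using der unfolding derangement_word_def by simp
  have v: "?v = Pos xs @ t # Pos ys"
    using zero_block_decomp_Pos[OF d nonexc_valuesD(1)[OF t der]] .
  have t_le: "t \<le> ?j"
  proof -
    obtain j where "j < length ?v" "?v ! j = t" "t < Suc j"
      using t unfolding nonexc_values_def by auto
    moreover have "?v ! ?j = t" "?j < length ?v"
      using v by auto
    ultimately show ?thesis
      using dist nth_eq_iff_index_eq by fastforce
  qed
  have mem_A: "?v ! i \<in> ?A \<longleftrightarrow> Suc i < ?v ! i \<or> t \<le> ?v ! i" if "i < length ?v" for i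
    unfolding exc_or_above_def by (rule nth_mem_indexed_set_iff[OF dist that])
  show "t \<notin> set ys"
    using dist v nonexc_valuesD(1)[OF t der] by (auto simp: set_Pos)
  show "t \<in> ?A"
    using mem_A[of ?j] v by simp
  show "t < last xs \<longleftrightarrow> last xs \<in> ?A" if "xs \<noteq> []"
  proof -
    have "last xs \<noteq> 0" "last xs \<noteq> t"
      using d that unfolding zero_block_decomp_def by auto
    moreover from this(1) have "last xs = ?v ! (?j - 1)" "?j - 1 < length ?v" "Suc (?j - 1) = ?j"
      using last_Pos[OF that] v by (auto simp: nth_append last_conv_nth)
    ultimately show ?thesis
      using mem_A[of "?j - 1"] t_le by auto
  qed
  show "hd ys < t \<longleftrightarrow> hd ys \<notin> ?A" if "ys \<noteq> []"
  proof -
    have "hd ys \<noteq> 0"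
      using d that unfolding zero_block_decomp_def by simp
    then have "hd ys = ?v ! Suc ?j" "Suc ?j < length ?v"
      using hd_Pos[OF that] v by (auto simp: nth_append hd_conv_nth)
    then show ?thesis
      using mem_A[of "Suc ?j"] t_le by auto
  qed
qed

lemma DES_wrt_slide_nonexc:
  assumes der: "derangement_word (Pos w)"
  shows "DES_wrt (zdesc (exc_or_above (Pos w) (Suc t))) (slide_nonexc t w)
    = DES_wrt (zdesc (exc_or_above (Pos w) t)) w"
proof (cases "t \<in> nonexc_values (Pos w)")
  case True
  obtain xs a b ys where d: "zero_block_decomp t w xs a b ys"
    using zero_block_decomp_exists[OF nonexc_valuesD(2)[OF True der]] by blast
  have "DES_wrt (zdesc (exc_or_above (Pos w) t - {t})) (slide t w)
      = DES_wrt (zdesc (exc_or_above (Pos w) t)) w"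
    using DES_wrt_slide[OF d nonexc_valuesD(1)[OF True der]] nonexc_block_borders[OF der True d]
    by blast
  then show ?thesis
    using True unfolding slide_nonexc_def exc_or_above_Suc[OF der] by simp
qed (simp add: slide_nonexc_def exc_or_above_Suc[OF der])

lemma card_eq_if_bij_betw:
  assumes "bij_betw f S S" "\<And>x. x \<in> S \<Longrightarrow> P (f x) \<longleftrightarrow> Q x"
  shows "card {x \<in> S. P x} = card {x \<in> S. Q x}"
proof -
  have "f ` {x \<in> S. Q x} = {x \<in> S. P x}"
  proof
    show "f ` {x \<in> S. Q x} \<subseteq> {x \<in> S. P x}"
      using assms bij_betwE by fastforce
    show "{x \<in> S. P x} \<subseteq> f ` {x \<in> S. Q x}"
    proof
      fix x
      assume x: "x \<in> {x \<in> S. P x}"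
      then obtain y where "y \<in> S" "x = f y"
        using bij_betw_imp_surj_on[OF assms(1)] by blast
      then show "x \<in> f ` {x \<in> S. Q x}"
        using x assms(2) by auto
    qed
  qed
  moreover have "inj_on f {x \<in> S. Q x}"
    using bij_betw_imp_inj_on[OF assms(1)] by (rule inj_on_subset) auto
  ultimately show ?thesis
    using card_image by fastforce
qed

theorem card_DES_eq_card_DES_wrt_exc_values:
  "card {w \<in> zder_words n. Q (Pos w) (DES w)}
    = card {w \<in> zder_words n. Q (Pos w) (DES_wrt (zdesc (exc_values (Pos w))) w)}"
proof -
  have chain: "card {w \<in> zder_words n. Q (Pos w) (DES_wrt (zdesc (exc_or_above (Pos w) t)) w)}
      = card {w \<in> zder_words n. Q (Pos w) (DES_wrt (zdesc (exc_or_above (Pos w) 0)) w)}" for t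
  proof (induction t)
    case (Suc t)
    have "card {w \<in> zder_words n. Q (Pos w) (DES_wrt (zdesc (exc_or_above (Pos w) (Suc t))) w)}
        = card {w \<in> zder_words n. Q (Pos w) (DES_wrt (zdesc (exc_or_above (Pos w) t)) w)}"
      by (rule card_eq_if_bij_betw[OF bij_betw_slide_nonexc[of t]])
        (simp add: zder_words_def Pos_slide_nonexc DES_wrt_slide_nonexc)
    then show ?case
      using Suc.IH by simp
  qed simp
  have "exc_or_above (Pos w) (Suc n) = exc_values (Pos w)" if "w \<in> zder_words n" for w
    using that length_Pos_le[of w] exc_or_above_large unfolding zder_words_def by simp
  then have "{w \<in> zder_words n. Q (Pos w) (DES_wrt (zdesc (exc_or_above (Pos w) (Suc n))) w)}
      = {w \<in> zder_words n. Q (Pos w) (DES_wrt (zdesc (exc_values (Pos w))) w)}"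
    by auto
  then show ?thesis
    using chain[of "Suc n"] by (simp add: DES_eq_DES_wrt_zdesc exc_or_above_0)
qed

section \<open>ZDer as a bijection onto the zero-derangement words\<close>

definition rank :: "nat list \<Rightarrow> nat \<Rightarrow> nat" where
  "rank L k = card {x \<in> set L. x \<le> k}"

lemma rank_nth:
  assumes "sorted_wrt (<) L" "j < length L"
  shows "rank L (L ! j) = Suc j"
proof -
  have "{x \<in> set L. x \<le> L ! j} = (\<lambda>i. L ! i) ` {..j}"
  proof (intro set_eqI iffI)
    fix x
    assume "x \<in> {x \<in> set L. x \<le> L ! j}"
    then obtain i where "i < length L" "x = L ! i" "L ! i \<le> L ! j"
      by (auto simp: in_set_conv_nth)
    then show "x \<in> (\<lambda>i. L ! i) ` {..j}"
      using sorted_wrt_nth_less[OF assms(1), of j i] by (cases "i \<le> j") auto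
  next
    fix x
    assume "x \<in> (\<lambda>i. L ! i) ` {..j}"
    then obtain i where "i \<le> j" "x = L ! i"
      by auto
    moreover have "L ! i \<le> L ! j" if "i \<le> j" for i
      using sorted_wrt_nth_less[OF assms(1), of i j] assms(2) that by (cases "i = j") auto
    ultimately show "x \<in> {x \<in> set L. x \<le> L ! j}"
      using assms(2) by auto
  qed
  moreover have "distinct L"
    using assms(1) by (simp add: strict_sorted_iff)
  then have "inj_on (\<lambda>i. L ! i) {..j}"
    using assms(2) by (auto intro!: inj_onI simp: nth_eq_iff_index_eq)
  ultimately show ?thesis
    unfolding rank_def by (simp add: card_image)
qed

lemma rank_less_iff:
  assumes "sorted_wrt (<) L" "a \<in> set L" "b \<in> set L"
  shows "rank L a < rank L b \<longleftrightarrow> a < b"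
proof -
  obtain i j where "i < length L" "a = L ! i" "j < length L" "b = L ! j"
    using assms(2,3) by (auto simp: in_set_conv_nth)
  moreover have "i < j \<longleftrightarrow> L ! i < L ! j" if "i < length L" "j < length L" for i j
    using sorted_wrt_nth_less[OF assms(1)] that by (metis less_asym' linorder_neqE_nat)
  ultimately show ?thesis
    using rank_nth[OF assms(1)] by simp
qed

lemma rank_eq_iff:
  "sorted_wrt (<) L \<Longrightarrow> a \<in> set L \<Longrightarrow> b \<in> set L \<Longrightarrow> rank L a = rank L b \<longleftrightarrow> a = b"
  using rank_less_iff[of L a b] rank_less_iff[of L b a] by (metis nat_neq_iff)

lemma rank_mem:
  assumes "sorted_wrt (<) L" "c \<in> set L"
  shows "rank L c \<in> {1..length L}"
  using assms rank_nth[OF assms(1)] by (auto simp: in_set_conv_nth)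

definition nonfixed :: "nat \<Rightarrow> (nat \<Rightarrow> nat) \<Rightarrow> nat list" where
  "nonfixed n \<sigma> = filter (\<lambda>i. \<sigma> i \<noteq> i) [1..<n+1]"

lemma set_nonfixed: "set (nonfixed n \<sigma>) = {i \<in> {1..n}. \<sigma> i \<noteq> i}"
  unfolding nonfixed_def by auto

lemma sorted_nonfixed: "sorted_wrt (<) (nonfixed n \<sigma>)"
  unfolding nonfixed_def using sorted_wrt_filter sorted_wrt_upt by blast

lemma red_eq_rank: "red n \<sigma> k = rank (nonfixed n \<sigma>) k"
  unfolding red_def rank_def set_nonfixed by (rule arg_cong[where f = card]) auto

lemma permutes_nonfixed:
  assumes "\<sigma> permutes {1..n}" "i \<in> set (nonfixed n \<sigma>)"
  shows "\<sigma> i \<in> set (nonfixed n \<sigma>)"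
  using assms permutes_in_image[OF assms(1)] permutes_inj[OF assms(1)]
  unfolding set_nonfixed by (auto dest: injD)

lemma ZDer_nth:
  "k < n \<Longrightarrow> ZDer n \<sigma> ! k = (if \<sigma> (Suc k) = Suc k then 0 else red n \<sigma> (\<sigma> (Suc k)))"
  unfolding ZDer_def by (simp del: upt_Suc)

lemma length_ZDer [simp]: "length (ZDer n \<sigma>) = n"
  unfolding ZDer_def by simp

lemma red_pos: "\<sigma> permutes {1..n} \<Longrightarrow> i \<in> set (nonfixed n \<sigma>) \<Longrightarrow> 0 < red n \<sigma> (\<sigma> i)"
  using rank_mem[OF sorted_nonfixed permutes_nonfixed] unfolding red_eq_rank by fastforce

lemma ZDer_nth_eq_0_iff:
  assumes "\<sigma> permutes {1..n}" "k < n"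
  shows "ZDer n \<sigma> ! k = 0 \<longleftrightarrow> \<sigma> (Suc k) = Suc k"
  using ZDer_nth[OF assms(2)] red_pos[OF assms(1), of "Suc k"] assms(2) unfolding set_nonfixed by auto

lemma Pos_ZDer:
  assumes "\<sigma> permutes {1..n}"
  shows "Pos (ZDer n \<sigma>) = map (\<lambda>i. red n \<sigma> (\<sigma> i)) (nonfixed n \<sigma>)"
proof -
  let ?f = "\<lambda>i. if \<sigma> i = i then 0 else red n \<sigma> (\<sigma> i)"
  have "Pos (ZDer n \<sigma>) = map ?f (filter (\<lambda>i. 0 < ?f i) [1..<n+1])"
    unfolding ZDer_def Pos_def by (simp add: filter_map comp_def)
  also have "filter (\<lambda>i. 0 < ?f i) [1..<n+1] = nonfixed n \<sigma>"
    unfolding nonfixed_def using red_pos[OF assms] set_nonfixed by (intro filter_cong) auto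
  also have "map ?f (nonfixed n \<sigma>) = map (\<lambda>i. red n \<sigma> (\<sigma> i)) (nonfixed n \<sigma>)"
    by (simp add: set_nonfixed)
  finally show ?thesis .
qed

lemma ZDer_in_zder_words:
  assumes perm: "\<sigma> permutes {1..n}"
  shows "ZDer n \<sigma> \<in> zder_words n"
proof -
  let ?L = "nonfixed n \<sigma>" and ?f = "\<lambda>i. red n \<sigma> (\<sigma> i)"
  let ?v = "map ?f ?L"
  note sorted = sorted_nonfixed[of n \<sigma>]
  have "inj_on ?f (set ?L)"
    using rank_eq_iff[OF sorted permutes_nonfixed[OF perm] permutes_nonfixed[OF perm]]
      permutes_inj[OF perm] unfolding red_eq_rank by (auto intro: inj_onI dest: injD)
  then have dist: "distinct ?v"
    using sorted by (simp add: distinct_map strict_sorted_iff)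
  moreover have "set ?v = {1..length ?v}"
  proof (rule card_subset_eq)
    show "set ?v \<subseteq> {1..length ?v}"
      using rank_mem[OF sorted permutes_nonfixed[OF perm]] unfolding red_eq_rank by auto
  qed (use distinct_card[OF dist] in simp_all)
  moreover have "?v ! j \<noteq> Suc j" if "j < length ?v" for j
  proof -
    have "?L ! j \<in> set ?L"
      using that by simp
    moreover have "\<sigma> (?L ! j) \<noteq> ?L ! j"
      using calculation unfolding set_nonfixed by simp
    ultimately have "rank ?L (\<sigma> (?L ! j)) \<noteq> rank ?L (?L ! j)"
      using rank_eq_iff[OF sorted permutes_nonfixed[OF perm]] by simp
    then show ?thesis
      using that rank_nth[OF sorted, of j] by (simp add: red_eq_rank)
  qed
  ultimately show ?thesis
    unfolding zder_words_def derangement_word_def by (simp add: Pos_ZDer[OF perm])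
qed

lemma inj_on_ZDer: "inj_on (ZDer n) {\<sigma>. \<sigma> permutes {1..n}}"
proof (rule inj_onI, safe)
  fix \<sigma>1 \<sigma>2
  assume p1: "\<sigma>1 permutes {1..n}" and p2: "\<sigma>2 permutes {1..n}" and eq: "ZDer n \<sigma>1 = ZDer n \<sigma>2"
  have fixed: "\<sigma>1 i = i \<longleftrightarrow> \<sigma>2 i = i" if "i \<in> {1..n}" for i
  proof -
    have "i - 1 < n" "Suc (i - 1) = i"
      using that by auto
    then show ?thesis
      using ZDer_nth_eq_0_iff[OF p1, of "i - 1"] ZDer_nth_eq_0_iff[OF p2, of "i - 1"] eq by simp
  qed
  then have L: "nonfixed n \<sigma>1 = nonfixed n \<sigma>2"
    unfolding nonfixed_def by (intro filter_cong) auto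
  show "\<sigma>1 = \<sigma>2"
  proof
    fix i
    show "\<sigma>1 i = \<sigma>2 i"
    proof (cases "i \<in> set (nonfixed n \<sigma>1)")
      case True
      then have i: "i \<in> {1..n}" "\<sigma>1 i \<noteq> i" "\<sigma>2 i \<noteq> i" "i \<in> set (nonfixed n \<sigma>2)"
        using fixed L unfolding set_nonfixed by auto
      then have "red n \<sigma>1 (\<sigma>1 i) = red n \<sigma>2 (\<sigma>2 i)"
        using ZDer_nth[of "i - 1" n \<sigma>1] ZDer_nth[of "i - 1" n \<sigma>2] eq by auto
      then show ?thesis
        using rank_eq_iff[OF sorted_nonfixed permutes_nonfixed[OF p1 True]]
          permutes_nonfixed[OF p2 i(4)] unfolding red_eq_rank L by simp
    next
      case False
      then show ?thesis
        using fixed L permutes_not_in[OF p1] permutes_not_in[OF p2]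
        unfolding set_nonfixed by (cases "i \<in> {1..n}") auto
    qed
  qed
qed

definition nonzero_positions :: "nat \<Rightarrow> nat list \<Rightarrow> nat list" where
  "nonzero_positions n w = filter (\<lambda>i. w ! (i - 1) \<noteq> 0) [1..<n+1]"

lemma set_nonzero_positions: "set (nonzero_positions n w) = {i \<in> {1..n}. w ! (i - 1) \<noteq> 0}"
  unfolding nonzero_positions_def by auto

lemma sorted_nonzero_positions: "sorted_wrt (<) (nonzero_positions n w)"
  unfolding nonzero_positions_def using sorted_wrt_filter sorted_wrt_upt by blast

lemma Pos_eq_map_nonzero_positions:
  assumes "length w = n"
  shows "Pos w = map (\<lambda>i. w ! (i - 1)) (nonzero_positions n w)"
proof -
  have "w = map (\<lambda>i. w ! (i - 1)) [1..<n+1]"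
    using assms by (intro nth_equalityI) (auto simp del: upt_Suc)
  then have "Pos w = filter (\<lambda>x. 0 < x) (map (\<lambda>i. w ! (i - 1)) [1..<n+1])"
    unfolding Pos_def by metis
  then show ?thesis
    unfolding nonzero_positions_def by (simp add: filter_map comp_def)
qed

text \<open>The inverse of \<^const>\<open>ZDer\<close>: the positive letters of \<open>w\<close>, a derangement of
  \<open>{1..m}\<close>, are transported to the positions of these letters.\<close>

definition zder_inv :: "nat \<Rightarrow> nat list \<Rightarrow> nat \<Rightarrow> nat" where
  "zder_inv n w i =
    (if i \<in> set (nonzero_positions n w) then nonzero_positions n w ! (w ! (i - 1) - 1) else i)"

context
  fixes n :: nat and w :: "nat list"
  assumes w: "w \<in> zder_words n"
begin

lemma Pos_zder_word: "Pos w = map (\<lambda>i. w ! (i - 1)) (nonzero_positions n w)"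
  using w Pos_eq_map_nonzero_positions unfolding zder_words_def by blast

lemma length_nonzero_positions: "length (nonzero_positions n w) = length (Pos w)"
  using Pos_zder_word by simp

lemma nth_Pos_zder_word_bounds:
  assumes "j < length (Pos w)"
  shows "Pos w ! j - 1 < length (Pos w)" "Suc (Pos w ! j - 1) = Pos w ! j"
proof -
  have "set (Pos w) = {1..length (Pos w)}"
    using w unfolding zder_words_def derangement_word_def by simp
  then have "Pos w ! j \<in> {1..length (Pos w)}"
    using nth_mem[OF assms] by blast
  then show "Pos w ! j - 1 < length (Pos w)" "Suc (Pos w ! j - 1) = Pos w ! j"
    by auto
qed

lemma nth_Pos_zder_word:
  assumes "j < length (Pos w)"
  shows "Pos w ! j = w ! (nonzero_positions n w ! j - 1)"
  using assms length_nonzero_positions by (subst Pos_zder_word) simp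

lemma zder_inv_nth:
  "j < length (Pos w) \<Longrightarrow> zder_inv n w (nonzero_positions n w ! j) = nonzero_positions n w ! (Pos w ! j - 1)"
  unfolding zder_inv_def by (simp add: length_nonzero_positions nth_Pos_zder_word)

lemma zder_inv_eq_self_iff: "zder_inv n w i = i \<longleftrightarrow> i \<notin> set (nonzero_positions n w)"
proof
  let ?L = "nonzero_positions n w"
  assume fixed: "zder_inv n w i = i"
  show "i \<notin> set ?L"
  proof
    assume "i \<in> set ?L"
    then obtain j where j: "j < length (Pos w)" "i = ?L ! j"
      by (auto simp: in_set_conv_nth length_nonzero_positions)
    then have "?L ! (Pos w ! j - 1) = ?L ! j"
      using fixed zder_inv_nth by simp
    moreover have "distinct ?L"
      using sorted_nonzero_positions strict_sorted_iff by blast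
    ultimately have "Pos w ! j - 1 = j"
      using nth_eq_iff_index_eq[of ?L "Pos w ! j - 1" j] nth_Pos_zder_word_bounds(1)[OF j(1)] j(1)
      by (simp add: length_nonzero_positions)
    then show False
      using w j(1) nth_Pos_zder_word_bounds(2)[OF j(1)] unfolding zder_words_def derangement_word_def by auto
  qed
qed (simp add: zder_inv_def)

lemma zder_inv_permutes: "zder_inv n w permutes {1..n}"
proof -
  let ?L = "nonzero_positions n w" and ?\<sigma> = "zder_inv n w"
  have dist_L: "distinct ?L" and dist_v: "distinct (Pos w)"
    using w sorted_nonzero_positions unfolding zder_words_def derangement_word_def
    by (auto simp: strict_sorted_iff)
  have "inj_on ?\<sigma> (set ?L)"
  proof (rule inj_onI)
    fix i k
    assume "i \<in> set ?L" "k \<in> set ?L" "?\<sigma> i = ?\<sigma> k"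
    then obtain a b where ab: "a < length (Pos w)" "i = ?L ! a" "b < length (Pos w)" "k = ?L ! b"
      and "?L ! (Pos w ! a - 1) = ?L ! (Pos w ! b - 1)"
      using zder_inv_nth by (auto simp: in_set_conv_nth length_nonzero_positions)
    then have "Pos w ! a - 1 = Pos w ! b - 1"
      using nth_eq_iff_index_eq[OF dist_L] nth_Pos_zder_word_bounds(1) by (simp add: length_nonzero_positions)
    then have "Pos w ! a = Pos w ! b"
      using nth_Pos_zder_word_bounds(2) ab by metis
    then show "i = k"
      using nth_eq_iff_index_eq[OF dist_v] ab by simp
  qed
  moreover have "?\<sigma> ` set ?L \<subseteq> set ?L"
  proof
    fix x
    assume "x \<in> ?\<sigma> ` set ?L"
    then obtain j where "j < length (Pos w)" "x = ?\<sigma> (?L ! j)"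
      by (auto simp: in_set_conv_nth length_nonzero_positions)
    then show "x \<in> set ?L"
      using zder_inv_nth nth_Pos_zder_word_bounds(1) by (simp add: length_nonzero_positions)
  qed
  ultimately have "bij_betw ?\<sigma> (set ?L) (set ?L)"
    unfolding bij_betw_def using endo_inj_surj by blast
  then have "?\<sigma> permutes set ?L"
    using zder_inv_eq_self_iff by (intro bij_imp_permutes) auto
  then show ?thesis
    by (rule permutes_subset) (auto simp: set_nonzero_positions)
qed

lemma nonfixed_zder_inv: "nonfixed n (zder_inv n w) = nonzero_positions n w"
  unfolding nonfixed_def nonzero_positions_def
  using zder_inv_eq_self_iff set_nonzero_positions by (intro filter_cong) auto

lemma ZDer_zder_inv: "ZDer n (zder_inv n w) = w"
proof (rule nth_equalityI)
  let ?L = "nonzero_positions n w" and ?\<sigma> = "zder_inv n w"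
  fix k
  assume "k < length (ZDer n ?\<sigma>)"
  then have k: "k < n" "Suc k - 1 = k"
    by simp_all
  show "ZDer n ?\<sigma> ! k = w ! k"
  proof (cases "Suc k \<in> set ?L")
    case True
    then obtain j where j: "j < length (Pos w)" "Suc k = ?L ! j"
      by (auto simp: in_set_conv_nth length_nonzero_positions)
    have "red n ?\<sigma> (?\<sigma> (Suc k)) = rank ?L (?L ! (Pos w ! j - 1))"
      unfolding red_eq_rank nonfixed_zder_inv j(2) zder_inv_nth[OF j(1)] ..
    also have "\<dots> = Pos w ! j"
      using rank_nth[OF sorted_nonzero_positions] nth_Pos_zder_word_bounds[OF j(1)]
      by (simp add: length_nonzero_positions)
    also have "\<dots> = w ! k"
      using nth_Pos_zder_word[OF j(1)] j(2) k(2) by simp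
    finally show ?thesis
      using ZDer_nth[OF k(1)] zder_inv_eq_self_iff True by simp
  next
    case False
    then show ?thesis
      using ZDer_nth[OF k(1)] zder_inv_eq_self_iff k unfolding set_nonzero_positions by simp
  qed
qed (use w in \<open>simp add: zder_words_def\<close>)

end

lemma card_permutes_ZDer:
  "card {\<sigma>. \<sigma> permutes {1..n} \<and> P (ZDer n \<sigma>)} = card {w \<in> zder_words n. P w}"
proof -
  let ?S = "{\<sigma>. \<sigma> permutes {1..n} \<and> P (ZDer n \<sigma>)}"
  have "ZDer n ` ?S = {w \<in> zder_words n. P w}"
  proof
    show "ZDer n ` ?S \<subseteq> {w \<in> zder_words n. P w}"
      using ZDer_in_zder_words by auto
    show "{w \<in> zder_words n. P w} \<subseteq> ZDer n ` ?S"
    proof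
      fix w
      assume "w \<in> {w \<in> zder_words n. P w}"
      then show "w \<in> ZDer n ` ?S"
        using zder_inv_permutes ZDer_zder_inv by (intro image_eqI[of _ _ "zder_inv n w"]) auto
    qed
  qed
  moreover have "inj_on (ZDer n) ?S"
    using inj_on_ZDer by (rule inj_on_subset) auto
  ultimately show ?thesis
    using card_image by fastforce
qed

section \<open>Fixed points, excedances and descents read off from ZDer\<close>

lemma fix_pts_eq:
  assumes "\<sigma> permutes {1..n}"
  shows "fix_pts n \<sigma> = n - length (Pos (ZDer n \<sigma>))"
proof -
  have "{1..n} = {i \<in> {1..n}. \<sigma> i = i} \<union> set (nonfixed n \<sigma>)"
    "{i \<in> {1..n}. \<sigma> i = i} \<inter> set (nonfixed n \<sigma>) = {}"
    unfolding set_nonfixed by auto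
  then have "card {1..n} = fix_pts n \<sigma> + card (set (nonfixed n \<sigma>))"
    unfolding fix_pts_def by (metis card_Un_disjoint finite_Un finite_atLeastAtMost)
  then show ?thesis
    using distinct_card[of "nonfixed n \<sigma>"] sorted_nonfixed[of n \<sigma>]
    by (simp add: Pos_ZDer[OF assms] strict_sorted_iff)
qed

lemma
  assumes "\<sigma> permutes {1..n}" "j < length (nonfixed n \<sigma>)"
  shows nth_Pos_ZDer: "Pos (ZDer n \<sigma>) ! j = red n \<sigma> (\<sigma> (nonfixed n \<sigma> ! j))"
    and Suc_less_nth_Pos_ZDer_iff: "Suc j < Pos (ZDer n \<sigma>) ! j \<longleftrightarrow> nonfixed n \<sigma> ! j < \<sigma> (nonfixed n \<sigma> ! j)"
proof -
  let ?L = "nonfixed n \<sigma>"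
  show nth: "Pos (ZDer n \<sigma>) ! j = red n \<sigma> (\<sigma> (?L ! j))"
    using assms by (simp add: Pos_ZDer)
  have mem: "?L ! j \<in> set ?L"
    using assms(2) by simp
  show "Suc j < Pos (ZDer n \<sigma>) ! j \<longleftrightarrow> ?L ! j < \<sigma> (?L ! j)"
    using rank_less_iff[OF sorted_nonfixed mem permutes_nonfixed[OF assms(1) mem]]
      rank_nth[OF sorted_nonfixed assms(2)]
    unfolding nth red_eq_rank by simp
qed

definition exc_word :: "nat list \<Rightarrow> nat" where
  "exc_word v = card {j. j < length v \<and> Suc j < v ! j}"

lemma exc_eq:
  assumes "\<sigma> permutes {1..n}"
  shows "exc n \<sigma> = exc_word (Pos (ZDer n \<sigma>))"
proof -
  let ?L = "nonfixed n \<sigma>"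
  let ?J = "{j. j < length ?L \<and> Suc j < Pos (ZDer n \<sigma>) ! j}"
  have "{i \<in> {1..n}. i < \<sigma> i} = (\<lambda>j. ?L ! j) ` ?J"
  proof (intro set_eqI iffI)
    fix i
    assume "i \<in> {i \<in> {1..n}. i < \<sigma> i}"
    then have "i \<in> set ?L" "i < \<sigma> i"
      unfolding set_nonfixed by auto
    then obtain j where "j < length ?L" "i = ?L ! j"
      by (auto simp: in_set_conv_nth)
    then show "i \<in> (\<lambda>j. ?L ! j) ` ?J"
      using \<open>i < \<sigma> i\<close> Suc_less_nth_Pos_ZDer_iff[OF assms] by auto
  next
    fix i
    assume "i \<in> (\<lambda>j. ?L ! j) ` ?J"
    then obtain j where "j < length ?L" "i = ?L ! j" "i < \<sigma> i"
      using Suc_less_nth_Pos_ZDer_iff[OF assms] by auto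
    then show "i \<in> {i \<in> {1..n}. i < \<sigma> i}"
      using nth_mem[of j ?L] unfolding set_nonfixed by auto
  qed
  moreover have "inj_on (\<lambda>j. ?L ! j) ?J"
    using sorted_nonfixed[of n \<sigma>] by (auto intro!: inj_onI simp: nth_eq_iff_index_eq strict_sorted_iff)
  ultimately have "exc n \<sigma> = card ?J"
    unfolding exc_def by (simp add: card_image)
  also have "?J = {j. j < length (Pos (ZDer n \<sigma>)) \<and> Suc j < Pos (ZDer n \<sigma>) ! j}"
    using Pos_ZDer[OF assms] by simp
  finally show ?thesis
    unfolding exc_word_def .
qed

lemma red_mem_exc_values_iff:
  assumes "\<sigma> permutes {1..n}" "c \<in> set (nonfixed n \<sigma>)"
  shows "red n \<sigma> (\<sigma> c) \<in> exc_values (Pos (ZDer n \<sigma>)) \<longleftrightarrow> c < \<sigma> c"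
proof -
  obtain j where j: "j < length (nonfixed n \<sigma>)" "c = nonfixed n \<sigma> ! j"
    using assms(2) by (auto simp: in_set_conv_nth)
  have "distinct (Pos (ZDer n \<sigma>))" "j < length (Pos (ZDer n \<sigma>))"
    using ZDer_in_zder_words[OF assms(1)] j(1) Pos_ZDer[OF assms(1)]
    unfolding zder_words_def derangement_word_def by auto
  from nth_mem_indexed_set_iff[OF this, of "\<lambda>j x. Suc j < x"] show ?thesis
    using nth_Pos_ZDer[OF assms(1) j(1)] Suc_less_nth_Pos_ZDer_iff[OF assms(1) j(1)] j(2)
    unfolding exc_values_def by simp
qed

lemma pword_nth: "k < n \<Longrightarrow> pword n \<sigma> ! k = \<sigma> (Suc k)"
  unfolding pword_def by (simp del: upt_Suc)

text \<open>A fixed point next to a non-fixed point \<open>j\<close> compares with \<open>\<sigma> j\<close> as \<open>j\<close> does,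
  and whether \<open>j < \<sigma> j\<close> is recorded by \<^const>\<open>exc_values\<close>.\<close>

lemma zdesc_ZDer_iff:
  assumes perm: "\<sigma> permutes {1..n}" and i: "1 \<le> i" "i < n"
  shows "zdesc (exc_values (Pos (ZDer n \<sigma>))) (ZDer n \<sigma> ! (i - 1)) (ZDer n \<sigma> ! i) \<longleftrightarrow> \<sigma> (Suc i) < \<sigma> i"
proof -
  let ?E = "exc_values (Pos (ZDer n \<sigma>))"
  have z: "ZDer n \<sigma> ! (i - 1) = (if \<sigma> i = i then 0 else red n \<sigma> (\<sigma> i))"
    "ZDer n \<sigma> ! i = (if \<sigma> (Suc i) = Suc i then 0 else red n \<sigma> (\<sigma> (Suc i)))"
    using ZDer_nth[of "i - 1" n \<sigma>] ZDer_nth[of i n \<sigma>] i by simp_all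
  have mem: "\<sigma> i \<noteq> i \<Longrightarrow> i \<in> set (nonfixed n \<sigma>)" "\<sigma> (Suc i) \<noteq> Suc i \<Longrightarrow> Suc i \<in> set (nonfixed n \<sigma>)"
    using i unfolding set_nonfixed by auto
  have "\<sigma> a = \<sigma> b \<longleftrightarrow> a = b" for a b
    using permutes_inj[OF perm] by (simp add: inj_eq)
  then have adj: "\<sigma> i = i \<Longrightarrow> \<sigma> (Suc i) \<noteq> i" "\<sigma> (Suc i) = Suc i \<Longrightarrow> \<sigma> i \<noteq> Suc i"
    by (metis n_not_Suc_n)+
  note pos = red_pos[OF perm] and exc = red_mem_exc_values_iff[OF perm]
  show ?thesis
  proof (cases "\<sigma> i = i"; cases "\<sigma> (Suc i) = Suc i")
    assume "\<sigma> i \<noteq> i" "\<sigma> (Suc i) \<noteq> Suc i"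
    then show ?thesis
      using z mem pos[OF mem(1)] pos[OF mem(2)] unfolding zdesc_def red_eq_rank
      by (simp add: rank_less_iff[OF sorted_nonfixed permutes_nonfixed[OF perm] permutes_nonfixed[OF perm]])
  qed (use z mem pos exc adj in \<open>auto simp: zdesc_def\<close>)
qed

lemma DES_pword:
  assumes "\<sigma> permutes {1..n}"
  shows "DES (pword n \<sigma>) = DES_wrt (zdesc (exc_values (Pos (ZDer n \<sigma>)))) (ZDer n \<sigma>)"
proof -
  have "pword n \<sigma> ! (i - 1) = \<sigma> i" "pword n \<sigma> ! i = \<sigma> (Suc i)" if "1 \<le> i" "i \<le> n - 1" for i
    using pword_nth[of "i - 1" n \<sigma>] pword_nth[of i n \<sigma>] that by simp_all
  then show ?thesis
    unfolding DES_def DES_wrt_def using zdesc_ZDer_iff[OF assms] by (auto simp: pword_def)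
qed

section \<open>Equidistribution\<close>

lemma card_DES_ZDer_eq_card_DES_pword:
  "card {\<sigma>. \<sigma> permutes {1..n} \<and> Q (Pos (ZDer n \<sigma>)) (DES (ZDer n \<sigma>))}
    = card {\<sigma>. \<sigma> permutes {1..n} \<and> Q (Pos (ZDer n \<sigma>)) (DES (pword n \<sigma>))}"
proof -
  have "card {\<sigma>. \<sigma> permutes {1..n} \<and> Q (Pos (ZDer n \<sigma>)) (DES (ZDer n \<sigma>))}
      = card {w \<in> zder_words n. Q (Pos w) (DES_wrt (zdesc (exc_values (Pos w))) w)}"
    unfolding card_permutes_ZDer[of n "\<lambda>w. Q (Pos w) (DES w)"]
    by (rule card_DES_eq_card_DES_wrt_exc_values)
  also have "\<dots> = card {\<sigma>. \<sigma> permutes {1..n}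
      \<and> Q (Pos (ZDer n \<sigma>)) (DES_wrt (zdesc (exc_values (Pos (ZDer n \<sigma>)))) (ZDer n \<sigma>))}"
    by (rule card_permutes_ZDer[symmetric])
  also have "\<dots> = card {\<sigma>. \<sigma> permutes {1..n} \<and> Q (Pos (ZDer n \<sigma>)) (DES (pword n \<sigma>))}"
    by (intro arg_cong[where f = card] Collect_cong) (auto simp: DES_pword)
  finally show ?thesis .
qed

lemma card_zder_words_maj_eq_card_mafz:
  "card {w \<in> zder_words n. P (Pos w) \<and> maj w = c} = card {w \<in> zder_words n. P (Pos w) \<and> mafz w = c}"
proof -
  let ?V = "{v \<in> Pos ` zder_words n. P v}"
  have fibres: "{w \<in> zder_words n. P (Pos w) \<and> f w = c}
      = (\<Union>v\<in>?V. {w \<in> zero_shuffles v (n - length v). f w = c})" for f :: "nat list \<Rightarrow> nat"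
    unfolding zder_words_def zero_shuffles_def using length_Pos_le by fastforce
  have card: "card {w \<in> zder_words n. P (Pos w) \<and> f w = c}
      = (\<Sum>v\<in>?V. card {w \<in> zero_shuffles v (n - length v). f w = c})" for f :: "nat list \<Rightarrow> nat"
    unfolding fibres
  proof (rule card_UN_disjoint)
    show "finite ?V"
      using finite_zder_words by simp
    show "\<forall>v\<in>?V. finite {w \<in> zero_shuffles v (n - length v). f w = c}"
      by simp
  qed (auto simp: zero_shuffles_def)
  have "card {w \<in> zero_shuffles v z. maj w = c} = card {w \<in> zero_shuffles v z. mafz w = c}"
    if "v \<in> ?V" for v z
  proof -
    have "\<forall>x\<in>set v. 0 < x"
      using that derangement_word_pos unfolding zder_words_def by auto
    then have "count (distr maj (zero_shuffles v z)) c = count (distr mafz (zero_shuffles v z)) c"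
      by (simp add: distr_maj_eq_distr_mafz)
    then show ?thesis
      by (simp add: count_distr)
  qed
  then show ?thesis
    unfolding card by (intro sum.cong) auto
qed

lemma fix_dez_maz_equidistributed:
  "card {\<sigma>. \<sigma> permutes {1..n} \<and> (fix_pts n \<sigma>, dez n \<sigma>, maz n \<sigma>) = (a, b, c)}
    = card {\<sigma>. \<sigma> permutes {1..n} \<and> (fix_pts n \<sigma>, des (pword n \<sigma>), maj (pword n \<sigma>)) = (a, b, c)}"
proof -
  let ?Q = "\<lambda>v S. n - length v = a \<and> card S = b \<and> (\<Sum>i\<in>S. i) = c"
  have "{\<sigma>. \<sigma> permutes {1..n} \<and> (fix_pts n \<sigma>, dez n \<sigma>, maz n \<sigma>) = (a, b, c)}
      = {\<sigma>. \<sigma> permutes {1..n} \<and> ?Q (Pos (ZDer n \<sigma>)) (DES (ZDer n \<sigma>))}"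
    "{\<sigma>. \<sigma> permutes {1..n} \<and> (fix_pts n \<sigma>, des (pword n \<sigma>), maj (pword n \<sigma>)) = (a, b, c)}
      = {\<sigma>. \<sigma> permutes {1..n} \<and> ?Q (Pos (ZDer n \<sigma>)) (DES (pword n \<sigma>))}"
    using fix_pts_eq unfolding dez_def maz_def des_def maj_def by auto
  then show ?thesis
    using card_DES_ZDer_eq_card_DES_pword[of n ?Q] by simp
qed

lemma fix_exc_maz_equidistributed:
  "card {\<sigma>. \<sigma> permutes {1..n} \<and> (fix_pts n \<sigma>, exc n \<sigma>, maz n \<sigma>) = (a, b, c)}
    = card {\<sigma>. \<sigma> permutes {1..n} \<and> (fix_pts n \<sigma>, exc n \<sigma>, maj (pword n \<sigma>)) = (a, b, c)}"
proof -
  let ?Q = "\<lambda>v S. n - length v = a \<and> exc_word v = b \<and> (\<Sum>i\<in>S. i) = c"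
  have "{\<sigma>. \<sigma> permutes {1..n} \<and> (fix_pts n \<sigma>, exc n \<sigma>, maz n \<sigma>) = (a, b, c)}
      = {\<sigma>. \<sigma> permutes {1..n} \<and> ?Q (Pos (ZDer n \<sigma>)) (DES (ZDer n \<sigma>))}"
    "{\<sigma>. \<sigma> permutes {1..n} \<and> (fix_pts n \<sigma>, exc n \<sigma>, maj (pword n \<sigma>)) = (a, b, c)}
      = {\<sigma>. \<sigma> permutes {1..n} \<and> ?Q (Pos (ZDer n \<sigma>)) (DES (pword n \<sigma>))}"
    using fix_pts_eq exc_eq unfolding maz_def maj_def by auto
  then show ?thesis
    using card_DES_ZDer_eq_card_DES_pword[of n ?Q] by simp
qed

lemma fix_exc_maz_maf_equidistributed:
  "card {\<sigma>. \<sigma> permutes {1..n} \<and> (fix_pts n \<sigma>, exc n \<sigma>, maz n \<sigma>) = (a, b, c)}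
    = card {\<sigma>. \<sigma> permutes {1..n} \<and> (fix_pts n \<sigma>, exc n \<sigma>, maf n \<sigma>) = (a, b, c)}"
proof -
  let ?P = "\<lambda>v. n - length v = a \<and> exc_word v = b"
  have "{\<sigma>. \<sigma> permutes {1..n} \<and> (fix_pts n \<sigma>, exc n \<sigma>, maz n \<sigma>) = (a, b, c)}
      = {\<sigma>. \<sigma> permutes {1..n} \<and> ?P (Pos (ZDer n \<sigma>)) \<and> maj (ZDer n \<sigma>) = c}"
    "{\<sigma>. \<sigma> permutes {1..n} \<and> (fix_pts n \<sigma>, exc n \<sigma>, maf n \<sigma>) = (a, b, c)}
      = {\<sigma>. \<sigma> permutes {1..n} \<and> ?P (Pos (ZDer n \<sigma>)) \<and> mafz (ZDer n \<sigma>) = c}"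
    using fix_pts_eq exc_eq unfolding maz_def maf_def by auto
  then show ?thesis
    using card_zder_words_maj_eq_card_mafz[of n ?P c]
      card_permutes_ZDer[of n "\<lambda>w. ?P (Pos w) \<and> maj w = c"]
      card_permutes_ZDer[of n "\<lambda>w. ?P (Pos w) \<and> mafz w = c"]
    by simp
qed

theorem corollary1p5:
  fixes n :: nat
  shows "(\<forall>a b c :: nat.
            card {\<sigma>. \<sigma> permutes {1..n} \<and> (fix_pts n \<sigma>, dez n \<sigma>, maz n \<sigma>) = (a, b, c)}
          = card {\<sigma>. \<sigma> permutes {1..n} \<and> (fix_pts n \<sigma>, des (pword n \<sigma>), maj (pword n \<sigma>)) = (a, b, c)})
       \<and> (\<forall>a b c :: nat.
            card {\<sigma>. \<sigma> permutes {1..n} \<and> (fix_pts n \<sigma>, exc n \<sigma>, maz n \<sigma>) = (a, b, c)}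
          = card {\<sigma>. \<sigma> permutes {1..n} \<and> (fix_pts n \<sigma>, exc n \<sigma>, maj (pword n \<sigma>)) = (a, b, c)})
       \<and> (\<forall>a b c :: nat.
            card {\<sigma>. \<sigma> permutes {1..n} \<and> (fix_pts n \<sigma>, exc n \<sigma>, maj (pword n \<sigma>)) = (a, b, c)}
          = card {\<sigma>. \<sigma> permutes {1..n} \<and> (fix_pts n \<sigma>, exc n \<sigma>, maf n \<sigma>) = (a, b, c)})"
  using fix_dez_maz_equidistributed fix_exc_maz_equidistributed fix_exc_maz_maf_equidistributed
  by simp

end
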